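(* In the LHARG setting with stochastic discount factor and risk-neutral measure $\mathbb{Q}$ as described in the context, assume the no-arbitrage condition $\nu_2=\lambda+\tfrac12$, let $Y^*=-\tfrac{\lambda^2}{2}-\nu_1+\tfrac18$ and assume $1-\theta Y^*>0$. Set $\kappa=\frac{1}{1-\theta Y^*}$ and $$\beta_i^*=\kappa\beta_i,\quad \alpha_j^*=\kappa\alpha_j,\quad \theta^*=\kappa\theta,\quad d^*=\kappa d,\quad \delta^*=\delta,\quad \gamma^*=\gamma+\lambda+\tfrac12,\quad\lambda^*=-\tfrac12$$ (in the heterogeneous case this means $\beta_l^*=\kappa\beta_l$, $\alpha_l^*=\kappa\alpha_l$ for $l=d,w,m$). Then under $\mathbb{Q}$ the pair $(y_t,\mathrm{RV}_t)$ again follows an LHARG model with these starred parameters: there are random variables $\epsilon^*_t$, i.i.d. $\mathcal{N}(0,1)$ under $\mathbb{Q}$ with $\epsilon^*_{t+1}$ independent of $(\mathcal{F}_t,\mathrm{RV}_{t+1})$, such that $y_{t+1}=r+\lambda^*\mathrm{RV}_{t+1}+\sqrt{\mathrm{RV}_{t+1}}\,\epsilon^*_{t+1}$ and, conditionally on $\mathcal{F}_t$, $\mathrm{RV}_{t+1}\sim\bar\gamma(\delta^*,\Theta^*_t,\theta^* )$ with $\Theta^*_t=d^*+\sum_{i=1}^p\beta^*_i\mathrm{RV}_{t+1-i}+\sum_{j=1}^q\alpha^*_j(\epsilon^*_{t+1-j}-\gamma^*\sqrt{\mathrm{RV}_{t+1-j}})^2$.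
   Context: LHARG setting. Discrete time. $(\epsilon_t)$ are i.i.d. $\mathcal{N}(0,1)$ under $\mathbb{P}$ and $(\mathrm{RV}_t)$ is a positive process (realized variance); $\mathcal{F}_t$ is the $\sigma$-algebra generated by $\{\epsilon_u,\mathrm{RV}_u:u\le t\}$. Parameters: $r\in\mathbb{R}$ (risk-free rate), $\lambda\in\mathbb{R}$, $\delta>0$, $\theta>0$, $d\ge0$, $\gamma\in\mathbb{R}$, integers $p,q\ge1$, $\beta_1,\dots,\beta_p\ge0$, $\alpha_1,\dots,\alpha_q\ge0$. Leverage: $\ell_t=(\epsilon_t-\gamma\sqrt{\mathrm{RV}_t})^2$. Log-returns: $y_{t+1}=\ln(S_{t+1}/S_t)=r+\lambda\mathrm{RV}_{t+1}+\sqrt{\mathrm{RV}_{t+1}}\,\epsilon_{t+1}$, with $\epsilon_{t+1}$ independent of $(\mathcal{F}_t,\mathrm{RV}_{t+1})$. Conditionally on $\mathcal{F}_t$, $\mathrm{RV}_{t+1}$ has the noncentral gamma law $\bar\gamma(\delta,\Theta_t,\theta)$ with $\Theta_t=d+\sum_{i=1}^p\beta_i\mathrm{RV}_{t+1-i}+\sum_{j=1}^q\alpha_j\ell_{t+1-j}$. Here $\bar\gamma(\delta,\Theta,\theta)$ (shape $\delta$, noncentrality $\Theta\ge0$, scale $\theta$) is the law of $\theta G$ where, conditionally on $N\sim\mathrm{Poisson}(\Theta)$, $G\sim\mathrm{Gamma}(\delta+N,1)$; for $X\sim\bar\gamma(\delta,\Theta,\theta)$ and $\theta x<1$, $\mathbb{E}[e^{xX}]=\exp(-\delta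 w(x,\theta)+\Theta v(x,\theta))$, where $v(x,\theta)=\frac{\theta x}{1-\theta x}$ and $w(x,\theta)=\ln(1-\theta x)$. (In the heterogeneous LHARG model proper, $p=q=22$, $\beta_1=\beta_d$, $\beta_i=\beta_w/4$ for $2\le i\le5$, $\beta_i=\beta_m/17$ for $6\le i\le22$, and likewise for $\alpha_j$ with $\alpha_d,\alpha_w,\alpha_m$.) Stochastic discount factor: $M_{s,s+1}=e^{-\nu_1\mathrm{RV}_{s+1}-\nu_2y_{s+1}}/\mathbb{E}^{\mathbb{P}}[e^{-\nu_1\mathrm{RV}_{s+1}-\nu_2y_{s+1}}\mid\mathcal{F}_s]$; the measure $\mathbb{Q}$ is defined by $\mathbb{E}^{\mathbb{Q}}[X\mid\mathcal{F}_t]=\mathbb{E}^{\mathbb{P}}[M_{t,t+1}\cdots M_{T-1,T}X\mid\mathcal{F}_t]$ for $\mathcal{F}_T$-measurable $X$. *)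

theory Defs
  imports "HOL-Probability.Probability"
begin

definition gen_sigma :: "'a measure \<Rightarrow> ('a \<Rightarrow> real) set \<Rightarrow> 'a measure" where
  "gen_sigma M Xs = sigma (space M) (\<Union>X\<in>Xs. {X -` B \<inter> space M | B. B \<in> sets borel})"

(* F_t = sigma(eps_u, RV_u : u \<le> t); time is integer-valued, negative times = presample values *)
definition filt :: "'a measure \<Rightarrow> (int \<Rightarrow> 'a \<Rightarrow> real) \<Rightarrow> (int \<Rightarrow> 'a \<Rightarrow> real) \<Rightarrow> int \<Rightarrow> 'a measure" where
  "filt M eps RV t = gen_sigma M ({eps u | u. u \<le> t} \<union> {RV u | u. u \<le> t})"

(* density of the noncentral gamma law bar-gamma(delta, Theta, theta): law of theta*G,
   G | N ~ Gamma(delta+N,1), N ~ Poisson(Theta) *)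
definition ncgamma_density :: "real \<Rightarrow> real \<Rightarrow> real \<Rightarrow> real \<Rightarrow> real" where
  "ncgamma_density \<delta> \<Theta> \<theta> x =
     (if x \<le> 0 then 0 else
       (\<Sum>n. exp (-\<Theta>) * \<Theta> ^ n / fact n *
          (x powr (\<delta> + real n - 1) * exp (- x / \<theta>) / (\<theta> powr (\<delta> + real n) * Gamma (\<delta> + real n)))))"

definition ncgamma :: "real \<Rightarrow> real \<Rightarrow> real \<Rightarrow> real measure" where
  "ncgamma \<delta> \<Theta> \<theta> = density lborel (\<lambda>x. ennreal (ncgamma_density \<delta> \<Theta> \<theta> x))"

definition has_cond_law :: "'a measure \<Rightarrow> 'a measure \<Rightarrow> ('a \<Rightarrow> real) \<Rightarrow> ('a \<Rightarrow> real measure) \<Rightarrow> bool" where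
  "has_cond_law M F X N \<longleftrightarrow>
     (\<forall>B\<in>sets borel. AE \<omega> in M.
        real_cond_exp M F (\<lambda>\<omega>'. indicator B (X \<omega>') :: real) \<omega> = measure (N \<omega>) B)"

definition lharg_Theta :: "real \<Rightarrow> (nat \<Rightarrow> real) \<Rightarrow> (nat \<Rightarrow> real) \<Rightarrow> real \<Rightarrow> nat \<Rightarrow> nat \<Rightarrow>
    (int \<Rightarrow> 'a \<Rightarrow> real) \<Rightarrow> (int \<Rightarrow> 'a \<Rightarrow> real) \<Rightarrow> int \<Rightarrow> 'a \<Rightarrow> real" where
  "lharg_Theta d \<beta> \<alpha> \<gamma> p q RV eps t \<omega> =
     d + (\<Sum>i=1..p. \<beta> i * RV (t + 1 - int i) \<omega>)
       + (\<Sum>j=1..q. \<alpha> j * (eps (t + 1 - int j) \<omega> - \<gamma> * sqrt (RV (t + 1 - int j) \<omega>))\<^sup>2)"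

definition lharg :: "'a measure \<Rightarrow> (int \<Rightarrow> 'a measure) \<Rightarrow> (int \<Rightarrow> 'a \<Rightarrow> real) \<Rightarrow> (int \<Rightarrow> 'a \<Rightarrow> real)
    \<Rightarrow> (int \<Rightarrow> 'a \<Rightarrow> real) \<Rightarrow> real \<Rightarrow> real \<Rightarrow> real \<Rightarrow> real \<Rightarrow> real \<Rightarrow> real \<Rightarrow> nat \<Rightarrow> nat
    \<Rightarrow> (nat \<Rightarrow> real) \<Rightarrow> (nat \<Rightarrow> real) \<Rightarrow> bool" where
  "lharg M F eps RV y r lam \<delta> \<theta> d \<gamma> p q \<beta> \<alpha> \<longleftrightarrow>
     (\<forall>t. \<forall>\<omega>\<in>space M. RV t \<omega> > 0) \<and>
     (\<forall>t. eps t \<in> borel_measurable M \<and> RV t \<in> borel_measurable M) \<and>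
     (\<forall>t\<ge>1. distributed M lborel (eps t) (\<lambda>x. ennreal (std_normal_density x))) \<and>
     prob_space.indep_vars M (\<lambda>_. borel) eps {1..} \<and>
     (\<forall>t\<ge>0. prob_space.indep_set M
        (sets (sigma (space M) (sets (F t) \<union> {RV (t + 1) -` B \<inter> space M | B. B \<in> sets borel})))
        {eps (t + 1) -` B \<inter> space M | B. B \<in> sets borel}) \<and>
     (\<forall>t. \<forall>\<omega>\<in>space M. y (t + 1) \<omega> = r + lam * RV (t + 1) \<omega> + sqrt (RV (t + 1) \<omega>) * eps (t + 1) \<omega>) \<and>
     (\<forall>t\<ge>0. has_cond_law M (F t) (RV (t + 1))
        (\<lambda>\<omega>. ncgamma \<delta> (lharg_Theta d \<beta> \<alpha> \<gamma> p q RV eps t \<omega>) \<theta>))"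

definition sdf :: "'a measure \<Rightarrow> (int \<Rightarrow> 'a measure) \<Rightarrow> (int \<Rightarrow> 'a \<Rightarrow> real) \<Rightarrow> (int \<Rightarrow> 'a \<Rightarrow> real)
    \<Rightarrow> real \<Rightarrow> real \<Rightarrow> int \<Rightarrow> 'a \<Rightarrow> ennreal" where
  "sdf M F RV y \<nu>1 \<nu>2 s \<omega> =
     ennreal (exp (- \<nu>1 * RV (s + 1) \<omega> - \<nu>2 * y (s + 1) \<omega>)) /
     nn_cond_exp M (F s) (\<lambda>\<omega>'. ennreal (exp (- \<nu>1 * RV (s + 1) \<omega>' - \<nu>2 * y (s + 1) \<omega>'))) \<omega>"

end

theory Submission
  imports Defs
begin

text \<open>Under \<open>Q\<close> the one-period density is \<open>exp (- \<nu>1 RV(t+1) - \<nu>2 y(t+1))\<close> divided by its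
  conditional expectation given \<open>F(t)\<close>. Given \<open>F(t)\<close>, \<open>RV(t+1)\<close> is noncentral gamma and the
  innovation \<open>\<epsilon>(t+1)\<close> is standard normal and independent of \<open>F(t)\<close> and \<open>RV(t+1)\<close>, so every
  expectation of a function of \<open>(RV(t+1), \<epsilon>(t+1))\<close> is a Gaussian integral inside a noncentral
  gamma integral. In the Gaussian integral the factor \<open>exp (- \<nu>2 sqrt RV \<epsilon>)\<close> shifts \<open>\<epsilon>\<close> by
  \<open>\<nu>2 sqrt RV\<close> (Cameron--Martin), so \<open>\<epsilon>* = \<epsilon> + \<nu>2 sqrt RV\<close> is standard normal and independent
  of the past under \<open>Q\<close>, and the density reduces to \<open>exp (Y* RV(t+1))\<close>. This exponential tilt
  maps the Poisson mixture of gamma laws with noncentrality \<open>\<Theta>\<close> and scale \<open>\<theta>\<close> to the one with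
  noncentrality \<open>\<kappa> \<Theta>\<close> and scale \<open>\<kappa> \<theta>\<close>, where \<open>\<kappa> = 1 / (1 - \<theta> Y*)\<close>. Finally \<open>\<nu>2 = \<lambda> + 1/2\<close>
  turns the drift \<open>\<lambda> RV\<close> into \<open>- RV / 2\<close> and the leverage \<open>\<epsilon> - \<gamma> sqrt RV\<close> into
  \<open>\<epsilon>* - (\<gamma> + \<lambda> + 1/2) sqrt RV\<close>.\<close>

section \<open>Noncentral gamma laws\<close>

definition ncgamma_term :: "real \<Rightarrow> real \<Rightarrow> real \<Rightarrow> real \<Rightarrow> nat \<Rightarrow> real" where
  "ncgamma_term \<delta> \<Theta> \<theta> x n = exp (-\<Theta>) * \<Theta> ^ n / fact n *
     (x powr (\<delta> + real n - 1) * exp (- x / \<theta>) / (\<theta> powr (\<delta> + real n) * Gamma (\<delta> + real n)))"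

lemma ncgamma_density_eq_suminf:
  "ncgamma_density \<delta> \<Theta> \<theta> x = (if x \<le> 0 then 0 else suminf (ncgamma_term \<delta> \<Theta> \<theta> x))"
  unfolding ncgamma_density_def ncgamma_term_def by simp

lemma ncgamma_term_nonneg:
  assumes "\<delta> > 0" "\<Theta> \<ge> 0" "\<theta> > 0"
  shows "0 \<le> ncgamma_term \<delta> \<Theta> \<theta> x n"
  unfolding ncgamma_term_def using assms
  by (intro mult_nonneg_nonneg divide_nonneg_pos) (auto intro!: Gamma_real_pos)

lemma borel_measurable_ncgamma_term[measurable]:
  "(\<lambda>x. ncgamma_term \<delta> \<Theta> \<theta> x n) \<in> borel_measurable borel"
  unfolding ncgamma_term_def by measurable

lemma ncgamma_term_Suc:
  assumes "\<delta> > 0" "\<theta> > 0" "x > 0"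
  shows "ncgamma_term \<delta> \<Theta> \<theta> x (Suc n) =
    ncgamma_term \<delta> \<Theta> \<theta> x n * (\<Theta> * x / (\<theta> * (real n + 1) * (\<delta> + real n)))"
proof -
  have dn: "\<delta> + real n > 0" using assms by simp
  then have "\<delta> + real n \<notin> \<int>\<^sub>\<le>\<^sub>0" using nonpos_Ints_nonpos by force
  then have Gamma: "Gamma (\<delta> + real (Suc n)) = (\<delta> + real n) * Gamma (\<delta> + real n)"
    using Gamma_plus1[of "\<delta> + real n"] by (simp add: add_ac)
  have x_pow: "x powr (\<delta> + real (Suc n) - 1) = x powr (\<delta> + real n - 1) * x"
    using assms powr_add[of x "\<delta> + real n - 1" 1] by (simp add: add_ac)
  have \<theta>_pow: "\<theta> powr (\<delta> + real (Suc n)) = \<theta> powr (\<delta> + real n) * \<theta>"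
    using assms powr_add[of \<theta> "\<delta> + real n" 1] by (simp add: add_ac)
  show ?thesis unfolding ncgamma_term_def Gamma x_pow \<theta>_pow
    using dn assms Gamma_real_pos[OF dn] by (simp add: field_simps)
qed

lemma summable_ncgamma_term:
  assumes "\<delta> > 0" "\<Theta> \<ge> 0" "\<theta> > 0" "x > 0"
  shows "summable (ncgamma_term \<delta> \<Theta> \<theta> x)"
proof (rule summable_ratio_test[where c="1/2" and N="nat \<lceil>2 * \<Theta> * x / (\<theta> * \<delta>)\<rceil>"])
  fix n assume n: "nat \<lceil>2 * \<Theta> * x / (\<theta> * \<delta>)\<rceil> \<le> n"
  have nonneg: "0 \<le> ncgamma_term \<delta> \<Theta> \<theta> x m" for m
    using ncgamma_term_nonneg assms by blast
  have "2 * \<Theta> * x / (\<theta> * \<delta>) \<le> real n" using n by linarith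
  then have "2 * (\<Theta> * x) \<le> \<theta> * (real n * \<delta>)" using assms by (simp add: field_simps)
  also have "\<dots> \<le> \<theta> * ((real n + 1) * (\<delta> + real n))"
    using assms by (intro mult_left_mono) (auto simp: algebra_simps)
  finally have "\<Theta> * x / (\<theta> * (real n + 1) * (\<delta> + real n)) \<le> 1/2"
    using assms by (simp add: divide_le_eq mult.assoc)
  then have "ncgamma_term \<delta> \<Theta> \<theta> x n * (\<Theta> * x / (\<theta> * (real n + 1) * (\<delta> + real n)))
      \<le> ncgamma_term \<delta> \<Theta> \<theta> x n * (1/2)"
    by (rule mult_left_mono[OF _ nonneg])
  then have "ncgamma_term \<delta> \<Theta> \<theta> x (Suc n) \<le> 1/2 * ncgamma_term \<delta> \<Theta> \<theta> x n"
    by (simp only: ncgamma_term_Suc[OF assms(1,3,4)] mult.commute[of "1/2"])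
  then show "norm (ncgamma_term \<delta> \<Theta> \<theta> x (Suc n)) \<le> 1/2 * norm (ncgamma_term \<delta> \<Theta> \<theta> x n)"
    using nonneg by simp
qed simp

lemma ncgamma_density_nonneg:
  assumes "\<delta> > 0" "\<Theta> \<ge> 0" "\<theta> > 0"
  shows "ncgamma_density \<delta> \<Theta> \<theta> x \<ge> 0"
  using assms ncgamma_term_nonneg[OF assms]
  by (simp add: ncgamma_density_eq_suminf suminf_nonneg summable_ncgamma_term)

lemma ennreal_ncgamma_density_eq_suminf:
  assumes "\<delta> > 0" "\<Theta> \<ge> 0" "\<theta> > 0"
  shows "ennreal (ncgamma_density \<delta> \<Theta> \<theta> x) =
    (\<Sum>n. ennreal (indicator {0<..} x * ncgamma_term \<delta> \<Theta> \<theta> x n))"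
proof (cases "x > 0")
  case True
  then show ?thesis
    using summable_ncgamma_term[OF assms True] ncgamma_term_nonneg[OF assms]
    by (simp add: ncgamma_density_eq_suminf suminf_ennreal2)
qed (simp add: ncgamma_density_eq_suminf)

lemma nn_integral_gamma_kernel:
  assumes a: "a > 0" and b: "b > 0"
  shows "(\<integral>\<^sup>+x. ennreal (indicator {0<..} x * (x powr (a - 1) * exp (- x / b))) \<partial>lborel)
         = ennreal (b powr a * Gamma a)"
proof -
  have "(\<integral>\<^sup>+x. ennreal (indicator {0..} x * (x powr (a - 1) / exp x)) \<partial>lborel) = ennreal (Gamma a)"
    using nn_integral_has_integral_lebesgue[OF _ Gamma_integral_real[OF a]] by simp
  moreover have "ennreal (indicator {0<..} (b * x) * ((b * x) powr (a - 1) * exp (- (b * x) / b)))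
      = ennreal (b powr (a - 1)) * ennreal (indicator {0..} x * (x powr (a - 1) / exp x))" for x
  proof (cases "x > 0")
    case True
    then show ?thesis using b
      by (simp add: powr_mult ennreal_mult[symmetric] exp_minus field_simps zero_less_mult_iff)
  next
    case False
    then show ?thesis using b by (cases "x = 0") (auto simp: indicator_def zero_less_mult_iff)
  qed
  ultimately have "(\<integral>\<^sup>+x. ennreal (indicator {0<..} x * (x powr (a - 1) * exp (- x / b))) \<partial>lborel)
      = ennreal b * (ennreal (b powr (a - 1)) * ennreal (Gamma a))"
    using b nn_integral_real_affine[of "\<lambda>x. ennreal (indicator {0<..} x * (x powr (a - 1) * exp (- x / b)))" b 0]
    by (simp add: nn_integral_cmult del: times_divide_eq_right)
  also have "\<dots> = ennreal (b powr a * Gamma a)"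
    using a b by (simp add: ennreal_mult[symmetric] mult.assoc[symmetric] powr_mult_base)
  finally show ?thesis .
qed

lemma nn_integral_ncgamma_term:
  assumes "\<delta> > 0" "\<Theta> \<ge> 0" "\<theta> > 0"
  shows "(\<integral>\<^sup>+x. ennreal (indicator {0<..} x * ncgamma_term \<delta> \<Theta> \<theta> x n) \<partial>lborel)
    = ennreal (exp (-\<Theta>) * \<Theta> ^ n / fact n)"
proof -
  define C where "C = exp (-\<Theta>) * \<Theta> ^ n / fact n / (\<theta> powr (\<delta> + real n) * Gamma (\<delta> + real n))"
  have dn: "\<delta> + real n > 0" using assms by simp
  have C: "C \<ge> 0" unfolding C_def using assms by (auto intro!: divide_nonneg_pos)
  have "indicator {0<..} x * ncgamma_term \<delta> \<Theta> \<theta> x n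
      = C * (indicator {0<..} x * (x powr ((\<delta> + real n) - 1) * exp (- x / \<theta>)))" for x
    using assms Gamma_real_pos[OF dn] by (simp add: ncgamma_term_def C_def field_simps)
  then have "(\<lambda>x. ennreal (indicator {0<..} x * ncgamma_term \<delta> \<Theta> \<theta> x n)) =
      (\<lambda>x. ennreal C * ennreal (indicator {0<..} x * (x powr ((\<delta> + real n) - 1) * exp (- x / \<theta>))))"
    by (simp only: ennreal_mult'[OF C])
  then have "(\<integral>\<^sup>+x. ennreal (indicator {0<..} x * ncgamma_term \<delta> \<Theta> \<theta> x n) \<partial>lborel)
      = ennreal C * ennreal (\<theta> powr (\<delta> + real n) * Gamma (\<delta> + real n))"
    using nn_integral_gamma_kernel[OF dn assms(3)] by (simp add: nn_integral_cmult)
  also have "\<dots> = ennreal (exp (-\<Theta>) * \<Theta> ^ n / fact n)"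
  proof -
    have "Gamma (\<delta> + real n) \<noteq> 0" using Gamma_real_pos[OF dn] by simp
    moreover have "\<theta> powr (\<delta> + real n) * Gamma (\<delta> + real n) > 0" using assms Gamma_real_pos[OF dn] by simp
    ultimately show ?thesis using C assms by (simp add: ennreal_mult[symmetric] C_def)
  qed
  finally show ?thesis .
qed

lemma nn_integral_ncgamma_density:
  assumes "\<delta> > 0" "\<Theta> \<ge> 0" "\<theta> > 0"
  shows "(\<integral>\<^sup>+x. ennreal (ncgamma_density \<delta> \<Theta> \<theta> x) \<partial>lborel) = 1"
proof -
  have poisson: "(\<lambda>n. exp (-\<Theta>) * \<Theta> ^ n / fact n) sums 1"
    using sums_mult[OF exp_converges[of \<Theta>], of "exp (-\<Theta>)"]
    by (simp add: divide_inverse mult_ac exp_minus)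
  have "(\<integral>\<^sup>+x. ennreal (ncgamma_density \<delta> \<Theta> \<theta> x) \<partial>lborel)
      = (\<Sum>n. \<integral>\<^sup>+x. ennreal (indicator {0<..} x * ncgamma_term \<delta> \<Theta> \<theta> x n) \<partial>lborel)"
    by (simp add: ennreal_ncgamma_density_eq_suminf[OF assms] nn_integral_suminf)
  also have "\<dots> = (\<Sum>n. ennreal (exp (-\<Theta>) * \<Theta> ^ n / fact n))"
    by (simp add: nn_integral_ncgamma_term[OF assms])
  also have "\<dots> = 1"
    using poisson assms by (simp add: suminf_ennreal2 sums_summable sums_unique[symmetric])
  finally show ?thesis .
qed

lemma borel_measurable_ncgamma_density_pair[measurable]:
  "(\<lambda>z. ncgamma_density \<delta> (fst z) \<theta> (snd z)) \<in> borel_measurable (borel \<Otimes>\<^sub>M borel)"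
  unfolding ncgamma_density_eq_suminf ncgamma_term_def by measurable

lemma borel_measurable_ncgamma_density[measurable]:
  "ncgamma_density \<delta> \<Theta> \<theta> \<in> borel_measurable borel"
  unfolding ncgamma_density_eq_suminf ncgamma_term_def by measurable

lemma sets_ncgamma[simp, measurable_cong]: "sets (ncgamma \<delta> \<Theta> \<theta>) = sets borel"
  by (simp add: ncgamma_def)

lemma space_ncgamma[simp]: "space (ncgamma \<delta> \<Theta> \<theta>) = UNIV"
  by (simp add: ncgamma_def)

lemma prob_space_ncgamma:
  assumes "\<delta> > 0" "\<Theta> \<ge> 0" "\<theta> > 0"
  shows "prob_space (ncgamma \<delta> \<Theta> \<theta>)"
  unfolding ncgamma_def
  by (rule prob_spaceI, subst emeasure_density) (auto simp: nn_integral_ncgamma_density[OF assms])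

lemma nn_integral_ncgamma:
  assumes "g \<in> borel_measurable borel"
  shows "(\<integral>\<^sup>+x. g x \<partial>ncgamma \<delta> \<Theta> \<theta>) = (\<integral>\<^sup>+x. ennreal (ncgamma_density \<delta> \<Theta> \<theta> x) * g x \<partial>lborel)"
  unfolding ncgamma_def using assms
  by (subst nn_integral_density) (auto simp: measurable_cong_sets[OF sets_lborel])

lemma measurable_ncgamma_prob_algebra:
  assumes \<Theta>[measurable]: "\<Theta> \<in> borel_measurable N" and nonneg: "\<And>\<omega>. \<omega> \<in> space N \<Longrightarrow> \<Theta> \<omega> \<ge> 0"
    and "\<delta> > 0" "\<theta> > 0"
  shows "(\<lambda>\<omega>. ncgamma \<delta> (\<Theta> \<omega>) \<theta>) \<in> N \<rightarrow>\<^sub>M prob_algebra borel"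
proof (rule measurable_prob_algebraI)
  show "prob_space (ncgamma \<delta> (\<Theta> \<omega>) \<theta>)" if "\<omega> \<in> space N" for \<omega>
    using prob_space_ncgamma nonneg that assms by blast
  show "(\<lambda>\<omega>. ncgamma \<delta> (\<Theta> \<omega>) \<theta>) \<in> N \<rightarrow>\<^sub>M subprob_algebra borel"
  proof (rule measurable_subprob_algebra)
    fix B :: "real set" assume [measurable]: "B \<in> sets borel"
    have "(\<lambda>z. ennreal (ncgamma_density \<delta> (fst z) \<theta> (snd z)) * indicator B (snd z))
        \<in> borel_measurable (borel \<Otimes>\<^sub>M lborel)"
      by (simp add: measurable_cong_sets[OF sets_pair_measure_cong[OF refl sets_lborel] refl])
    then have "(\<lambda>\<Theta>. emeasure (ncgamma \<delta> \<Theta> \<theta>) B) \<in> borel_measurable borel"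
      using lborel.borel_measurable_nn_integral[of "\<lambda>\<Theta> x. ennreal (ncgamma_density \<delta> \<Theta> \<theta> x) * indicator B x" borel]
      by (simp add: ncgamma_def emeasure_density split_beta')
    then show "(\<lambda>\<omega>. emeasure (ncgamma \<delta> (\<Theta> \<omega>) \<theta>) B) \<in> borel_measurable N"
      by measurable
  qed (use nonneg assms in \<open>auto intro: prob_space_imp_subprob_space prob_space_ncgamma\<close>)
qed

lemma ncgamma_term_exp_tilt:
  assumes "1 - \<theta> * Y > 0" and \<kappa>: "\<kappa> = 1 / (1 - \<theta> * Y)" and "\<theta> > 0" "x > 0" "\<delta> > 0"
  shows "exp (Y * x) * ncgamma_term \<delta> \<Theta> \<theta> x n =
    \<kappa> powr \<delta> * exp ((\<kappa> - 1) * \<Theta>) * ncgamma_term \<delta> (\<kappa> * \<Theta>) (\<kappa> * \<theta>) x n"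
proof -
  have \<kappa>_pos: "\<kappa> > 0" using assms by simp
  have inv_\<kappa>: "1 / \<kappa> = 1 - \<theta> * Y" using assms by simp
  have "- x / (\<kappa> * \<theta>) = - x * (1 / \<kappa>) / \<theta>" by simp
  also have "\<dots> = - x / \<theta> + Y * x" unfolding inv_\<kappa> using assms(3) by (simp add: field_simps)
  finally have "- x / (\<kappa> * \<theta>) = - x / \<theta> + Y * x" .
  then have e1: "exp (- x / (\<kappa> * \<theta>)) = exp (- x / \<theta>) * exp (Y * x)"
    by (simp only: exp_add)
  have e2: "(\<kappa> * \<theta>) powr (\<delta> + real n) = \<kappa> powr \<delta> * \<kappa> ^ n * \<theta> powr (\<delta> + real n)"
    using \<kappa>_pos assms(3) by (simp add: powr_mult powr_add powr_realpow)
  have e3: "exp (- (\<kappa> * \<Theta>)) = exp (-\<Theta>) * exp (- ((\<kappa> - 1) * \<Theta>))"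
    by (simp add: exp_add[symmetric] algebra_simps)
  show ?thesis unfolding ncgamma_term_def e1 e2 e3
    using \<kappa>_pos assms(3-5) Gamma_real_pos[of "\<delta> + real n"]
    by (simp add: power_mult_distrib field_simps exp_minus mult_exp_exp)
qed

lemma ncgamma_density_exp_tilt:
  assumes pos: "1 - \<theta> * Y > 0" and \<kappa>: "\<kappa> = 1 / (1 - \<theta> * Y)"
    and "\<theta> > 0" "\<delta> > 0" "\<Theta> \<ge> 0"
  shows "exp (Y * x) * ncgamma_density \<delta> \<Theta> \<theta> x =
    \<kappa> powr \<delta> * exp ((\<kappa> - 1) * \<Theta>) * ncgamma_density \<delta> (\<kappa> * \<Theta>) (\<kappa> * \<theta>) x"
proof (cases "x > 0")
  case True
  have "\<kappa> > 0" using pos \<kappa> by simp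
  then have "summable (ncgamma_term \<delta> (\<kappa> * \<Theta>) (\<kappa> * \<theta>) x)"
    using summable_ncgamma_term assms True by simp
  moreover have "summable (ncgamma_term \<delta> \<Theta> \<theta> x)"
    using summable_ncgamma_term assms True by blast
  ultimately show ?thesis
    using True ncgamma_term_exp_tilt[OF pos \<kappa> _ True, of \<delta> \<Theta>] assms
    by (simp add: ncgamma_density_eq_suminf suminf_mult[symmetric])
qed (simp add: ncgamma_density_eq_suminf)

lemma nn_integral_ncgamma_exp_tilt:
  assumes pos: "1 - \<theta> * Y > 0" and \<kappa>: "\<kappa> = 1 / (1 - \<theta> * Y)"
    and "\<theta> > 0" "\<delta> > 0" "\<Theta> \<ge> 0" and [measurable]: "g \<in> borel_measurable borel"
  shows "(\<integral>\<^sup>+x. ennreal (exp (Y * x)) * g x \<partial>ncgamma \<delta> \<Theta> \<theta>) =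
    ennreal (\<kappa> powr \<delta> * exp ((\<kappa> - 1) * \<Theta>)) * (\<integral>\<^sup>+x. g x \<partial>ncgamma \<delta> (\<kappa> * \<Theta>) (\<kappa> * \<theta>))"
proof -
  have "\<kappa> > 0" using pos \<kappa> by simp
  then have dens: "ennreal (exp (Y * x)) * ennreal (ncgamma_density \<delta> \<Theta> \<theta> x)
      = ennreal (\<kappa> powr \<delta> * exp ((\<kappa> - 1) * \<Theta>)) * ennreal (ncgamma_density \<delta> (\<kappa> * \<Theta>) (\<kappa> * \<theta>) x)"
    for x
    using ncgamma_density_exp_tilt[OF pos \<kappa> assms(3-5), of x] assms
      ncgamma_density_nonneg[of \<delta> \<Theta> \<theta> x] ncgamma_density_nonneg[of \<delta> "\<kappa> * \<Theta>" "\<kappa> * \<theta>" x]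
    by (simp add: ennreal_mult[symmetric])
  have "ennreal (ncgamma_density \<delta> \<Theta> \<theta> x) * (ennreal (exp (Y * x)) * g x)
      = ennreal (\<kappa> powr \<delta> * exp ((\<kappa> - 1) * \<Theta>)) * (ennreal (ncgamma_density \<delta> (\<kappa> * \<Theta>) (\<kappa> * \<theta>) x) * g x)"
    for x
    using dens[of x] by (metis mult.assoc mult.commute)
  then show ?thesis
    by (simp add: nn_integral_ncgamma nn_integral_cmult)
qed

lemma AE_ncgamma_pos: "AE x in ncgamma \<delta> \<Theta> \<theta>. 0 < x"
  unfolding ncgamma_def by (subst AE_density) (auto simp: ncgamma_density_def not_less)

section \<open>The standard normal law\<close>

abbreviation std_normal :: "real measure" where
  "std_normal \<equiv> density lborel (\<lambda>x. ennreal (std_normal_density x))"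

lemma prob_space_std_normal: "prob_space std_normal"
  using prob_space_normal_density by simp

lemma borel_measurable_nn_integral_std_normal:
  assumes [measurable]: "h \<in> borel_measurable (borel \<Otimes>\<^sub>M borel)"
  shows "(\<lambda>x. \<integral>\<^sup>+z. h (x, z) \<partial>std_normal) \<in> borel_measurable borel"
proof -
  interpret N: prob_space std_normal by (rule prob_space_std_normal)
  have "(\<lambda>w. h (fst w, snd w)) \<in> borel_measurable (borel \<Otimes>\<^sub>M borel)"
    by measurable
  then have "(\<lambda>w. h (fst w, snd w)) \<in> borel_measurable (borel \<Otimes>\<^sub>M std_normal)"
    using measurable_cong_sets[OF sets_pair_measure_cong[OF refl, of std_normal borel] refl,
      of "borel :: real measure" "borel :: ennreal measure"]
    by simp
  then show ?thesis
    using N.borel_measurable_nn_integral[of "\<lambda>x z. h (x, z)" borel] by (simp add: split_beta')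
qed

lemma std_normal_density_mult_exp:
  "std_normal_density z * exp (- a * z) = exp (a\<^sup>2 / 2) * std_normal_density (z + a)"
proof -
  have "- z\<^sup>2 / 2 + - a * z = a\<^sup>2 / 2 + - (z + a)\<^sup>2 / 2" by (simp add: power2_eq_square field_simps)
  then have "exp (- z\<^sup>2 / 2) * exp (- a * z) = exp (a\<^sup>2 / 2) * exp (- (z + a)\<^sup>2 / 2)"
    by (simp add: exp_add[symmetric])
  then show ?thesis unfolding std_normal_density_def by (simp add: mult_ac)
qed

lemma nn_integral_std_normal_exp_shift:
  assumes [measurable]: "h \<in> borel_measurable borel"
  shows "(\<integral>\<^sup>+z. ennreal (exp (- a * z)) * h (z + a) \<partial>std_normal)
       = ennreal (exp (a\<^sup>2 / 2)) * (\<integral>\<^sup>+z. h z \<partial>std_normal)"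
proof -
  have "(\<integral>\<^sup>+z. ennreal (exp (- a * z)) * h (z + a) \<partial>std_normal)
      = (\<integral>\<^sup>+z. ennreal (std_normal_density z) * (ennreal (exp (- a * z)) * h (z + a)) \<partial>lborel)"
    by (rule nn_integral_density) auto
  also have "\<dots> = (\<integral>\<^sup>+z. ennreal (exp (a\<^sup>2 / 2)) *
      (ennreal (std_normal_density (a + 1 * z)) * h (a + 1 * z)) \<partial>lborel)"
  proof (rule nn_integral_cong)
    fix z
    have "ennreal (std_normal_density z) * ennreal (exp (- a * z))
        = ennreal (exp (a\<^sup>2 / 2)) * ennreal (std_normal_density (z + a))"
      using std_normal_density_mult_exp[of z a] by (simp add: ennreal_mult[symmetric])
    then show "ennreal (std_normal_density z) * (ennreal (exp (- a * z)) * h (z + a)) =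
        ennreal (exp (a\<^sup>2 / 2)) * (ennreal (std_normal_density (a + 1 * z)) * h (a + 1 * z))"
      by (simp add: mult.assoc[symmetric] add.commute)
  qed
  also have "\<dots> = ennreal (exp (a\<^sup>2 / 2)) *
      (\<integral>\<^sup>+z. ennreal (std_normal_density (a + 1 * z)) * h (a + 1 * z) \<partial>lborel)"
    by (rule nn_integral_cmult) measurable
  also have "(\<integral>\<^sup>+z. ennreal (std_normal_density (a + 1 * z)) * h (a + 1 * z) \<partial>lborel)
      = (\<integral>\<^sup>+z. h z \<partial>std_normal)"
    using nn_integral_real_affine[of "\<lambda>u. ennreal (std_normal_density u) * h u" 1 a]
    by (simp add: nn_integral_density)
  finally show ?thesis .
qed

section \<open>Conditional laws and densities on sub-\<sigma>-algebras\<close>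

lemma sigma_finite_subalgebra_prob_space:
  "prob_space M \<Longrightarrow> subalgebra M F \<Longrightarrow> sigma_finite_subalgebra M F"
  by (simp add: finite_measure_subalgebra_is_sigma_finite finite_measure_subalgebra_def
      finite_measure_subalgebra_axioms_def prob_space.finite_measure)

lemma prob_space_kernel:
  "K \<in> F \<rightarrow>\<^sub>M prob_algebra N \<Longrightarrow> \<omega> \<in> space F \<Longrightarrow> prob_space (K \<omega>)"
  using measurable_space[of K F "prob_algebra N" \<omega>] by (simp add: space_prob_algebra)

lemma borel_measurable_nn_integral_kernel:
  assumes "K \<in> F \<rightarrow>\<^sub>M prob_algebra N" "g \<in> borel_measurable N"
  shows "(\<lambda>\<omega>. \<integral>\<^sup>+x. g x \<partial>K \<omega>) \<in> borel_measurable F"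
  using measurable_compose[OF measurable_prob_algebraD[OF assms(1)]
      nn_integral_measurable_subprob_algebra[OF assms(2)]] .

lemma AE_real_cond_exp_eq_iff:
  assumes "sigma_finite_subalgebra M F" and f: "integrable M f"
    and g: "integrable M g" "g \<in> borel_measurable F"
  shows "(AE \<omega> in M. real_cond_exp M F f \<omega> = g \<omega>) \<longleftrightarrow>
    (\<forall>A\<in>sets F. (\<integral>x\<in>A. f x \<partial>M) = (\<integral>x\<in>A. g x \<partial>M))"
proof
  interpret sigma_finite_subalgebra M F by fact
  assume cond: "AE \<omega> in M. real_cond_exp M F f \<omega> = g \<omega>"
  have [measurable]: "g \<in> borel_measurable M" using measurable_from_subalg[OF subalg g(2)] .
  show "\<forall>A\<in>sets F. (\<integral>x\<in>A. f x \<partial>M) = (\<integral>x\<in>A. g x \<partial>M)"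
  proof
    fix A assume A: "A \<in> sets F"
    then have [measurable]: "A \<in> sets M" using subalg by (auto simp: subalgebra_def)
    have "(\<integral>x\<in>A. f x \<partial>M) = (\<integral>x\<in>A. real_cond_exp M F f x \<partial>M)"
      by (rule real_cond_exp_intA[OF f A])
    also have "\<dots> = (\<integral>x\<in>A. g x \<partial>M)"
      unfolding set_lebesgue_integral_def by (rule integral_cong_AE) (use cond in auto)
    finally show "(\<integral>x\<in>A. f x \<partial>M) = (\<integral>x\<in>A. g x \<partial>M)" .
  qed
next
  interpret sigma_finite_subalgebra M F by fact
  assume "\<forall>A\<in>sets F. (\<integral>x\<in>A. f x \<partial>M) = (\<integral>x\<in>A. g x \<partial>M)"
  then show "AE \<omega> in M. real_cond_exp M F f \<omega> = g \<omega>"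
    using f g by (intro real_cond_exp_charact) auto
qed

lemma has_cond_law_iff:
  assumes M: "prob_space M" and F: "subalgebra M F" and [measurable]: "X \<in> borel_measurable M"
    and K: "K \<in> F \<rightarrow>\<^sub>M prob_algebra borel"
  shows "has_cond_law M F X K \<longleftrightarrow>
    (\<forall>B\<in>sets borel. \<forall>A\<in>sets F. emeasure M (A \<inter> X -` B) = (\<integral>\<^sup>+\<omega>\<in>A. emeasure (K \<omega>) B \<partial>M))"
  unfolding has_cond_law_def
proof (intro ball_cong refl)
  fix B :: "real set" assume [measurable]: "B \<in> sets borel"
  interpret prob_space M by (rule M)
  have space_F: "space F = space M" using F by (simp add: subalgebra_def)
  define f :: "'a \<Rightarrow> real" where "f \<omega> = indicator B (X \<omega>)" for \<omega>
  define g :: "'a \<Rightarrow> real" where "g \<omega> = measure (K \<omega>) B" for \<omega>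
  have [measurable]: "f \<in> borel_measurable M" unfolding f_def by measurable
  have g_F: "g \<in> borel_measurable F"
    unfolding g_def using measurable_compose[OF K measurable_measure_prob_algebra] by simp
  have [measurable]: "g \<in> borel_measurable M" using measurable_from_subalg[OF F g_F] .
  have K_prob: "prob_space (K \<omega>)" if "\<omega> \<in> space M" for \<omega>
    using prob_space_kernel[OF K] that space_F by simp
  have emeasure_K: "emeasure (K \<omega>) B = ennreal (g \<omega>)" if "\<omega> \<in> space M" for \<omega>
    unfolding g_def using K_prob[OF that]
    by (simp add: finite_measure.emeasure_eq_measure prob_space.finite_measure)
  have g01: "0 \<le> g \<omega> \<and> g \<omega> \<le> 1" if "\<omega> \<in> space M" for \<omega>
    unfolding g_def using K_prob[OF that] by (simp add: prob_space.prob_le_1)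
  have int_f: "integrable M f" by (rule integrable_const_bound[where B=1]) (auto simp: f_def)
  have int_g: "integrable M g" by (rule integrable_const_bound[where B=1]) (use g01 in auto)
  have "(\<integral>x\<in>A. f x \<partial>M) = (\<integral>x\<in>A. g x \<partial>M) \<longleftrightarrow>
      emeasure M (A \<inter> X -` B) = (\<integral>\<^sup>+\<omega>\<in>A. emeasure (K \<omega>) B \<partial>M)" if A: "A \<in> sets F" for A
  proof -
    have A_M[measurable]: "A \<in> sets M" using A F by (auto simp: subalgebra_def)
    then have "A \<inter> X -` B = A \<inter> {\<omega>\<in>space M. X \<omega> \<in> B}" using sets.sets_into_space by blast
    then have "(\<integral>\<^sup>+x. ennreal (indicator A x * f x) \<partial>M) = emeasure M (A \<inter> X -` B)"
      by (simp add: nn_integral_indicator[symmetric] del: nn_integral_indicator)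
         (auto intro!: nn_integral_cong simp: f_def indicator_def)
    then have f_A: "ennreal (\<integral>x\<in>A. f x \<partial>M) = emeasure M (A \<inter> X -` B)"
      using integrable_mult_indicator[OF A_M int_f] unfolding set_lebesgue_integral_def
      by (subst (asm) nn_integral_eq_integral) (auto simp: f_def)
    have "(\<integral>\<^sup>+x. ennreal (indicator A x * g x) \<partial>M) = (\<integral>\<^sup>+\<omega>\<in>A. emeasure (K \<omega>) B \<partial>M)"
      by (rule nn_integral_cong) (simp add: emeasure_K indicator_def)
    then have g_A: "ennreal (\<integral>x\<in>A. g x \<partial>M) = (\<integral>\<^sup>+\<omega>\<in>A. emeasure (K \<omega>) B \<partial>M)"
      using integrable_mult_indicator[OF A_M int_g] g01 unfolding set_lebesgue_integral_def
      by (subst (asm) nn_integral_eq_integral) (auto intro!: AE_I2)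
    have "0 \<le> (\<integral>x\<in>A. f x \<partial>M)" "0 \<le> (\<integral>x\<in>A. g x \<partial>M)"
      using g01 unfolding set_lebesgue_integral_def
      by (auto intro!: integral_nonneg_AE AE_I2 simp: f_def)
    then show ?thesis by (simp flip: f_A g_A)
  qed
  then show "(AE \<omega> in M. real_cond_exp M F (\<lambda>\<omega>'. indicator B (X \<omega>')) \<omega> = measure (K \<omega>) B) \<longleftrightarrow>
      (\<forall>A\<in>sets F. emeasure M (A \<inter> X -` B) = (\<integral>\<^sup>+\<omega>\<in>A. emeasure (K \<omega>) B \<partial>M))"
    using AE_real_cond_exp_eq_iff[OF sigma_finite_subalgebra_prob_space[OF M F] int_f int_g g_F]
    unfolding f_def g_def by simp
qed

lemma has_cond_law_nn_cond_exp:
  assumes M: "prob_space M" and F: "subalgebra M F" and [measurable]: "X \<in> borel_measurable M"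
    and K: "K \<in> F \<rightarrow>\<^sub>M prob_algebra borel" and law: "has_cond_law M F X K"
    and [measurable]: "B \<in> sets borel"
  shows "AE \<omega> in M. nn_cond_exp M F (\<lambda>\<omega>. indicator B (X \<omega>)) \<omega> = emeasure (K \<omega>) B"
proof -
  interpret sigma_finite_subalgebra M F by (rule sigma_finite_subalgebra_prob_space[OF M F])
  have "AE \<omega> in M. emeasure (K \<omega>) B = nn_cond_exp M F (\<lambda>\<omega>. indicator B (X \<omega>)) \<omega>"
  proof (rule nn_cond_exp_charact)
    fix A assume A: "A \<in> sets F"
    then have [measurable]: "A \<in> sets M" using F by (auto simp: subalgebra_def)
    then have "A \<inter> X -` B = A \<inter> {\<omega>\<in>space M. X \<omega> \<in> B}" using sets.sets_into_space by blast
    then have "(\<integral>\<^sup>+x\<in>A. indicator B (X x) \<partial>M) = emeasure M (A \<inter> X -` B)"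
      by (simp add: nn_integral_indicator[symmetric] del: nn_integral_indicator)
         (auto intro!: nn_integral_cong simp: indicator_def)
    then show "(\<integral>\<^sup>+x\<in>A. indicator B (X x) \<partial>M) = (\<integral>\<^sup>+x\<in>A. emeasure (K x) B \<partial>M)"
      using law A \<open>B \<in> sets borel\<close> unfolding has_cond_law_iff[OF M F assms(3) K] by simp
  qed (use measurable_emeasure_kernel[OF measurable_prob_algebraD[OF K]] in simp_all)
  then show ?thesis by (auto elim: AE_mp)
qed

lemma nn_integral_has_cond_law:
  assumes M: "prob_space M" and F: "subalgebra M F" and [measurable]: "X \<in> borel_measurable M"
    and K: "K \<in> F \<rightarrow>\<^sub>M prob_algebra borel" and law: "has_cond_law M F X K"
    and w: "w \<in> borel_measurable F" and g[measurable]: "g \<in> borel_measurable borel"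
  shows "(\<integral>\<^sup>+\<omega>. w \<omega> * g (X \<omega>) \<partial>M) = (\<integral>\<^sup>+\<omega>. w \<omega> * (\<integral>\<^sup>+x. g x \<partial>K \<omega>) \<partial>M)"
proof -
  interpret sigma_finite_subalgebra M F by (rule sigma_finite_subalgebra_prob_space[OF M F])
  define Mw where "Mw = density M w"
  have [measurable]: "w \<in> borel_measurable M" using measurable_from_subalg[OF F w] .
  have Mw_nonempty: "space Mw \<noteq> {}"
    using prob_space.not_empty[OF M] by (simp add: Mw_def)
  have [measurable]: "(\<lambda>\<omega>. emeasure (K \<omega>) B) \<in> borel_measurable M" if "B \<in> sets borel" for B
    using measurable_from_subalg[OF F measurable_emeasure_kernel[OF measurable_prob_algebraD[OF K] that]] .
  have K_Mw: "K \<in> Mw \<rightarrow>\<^sub>M subprob_algebra borel"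
    using measurable_from_subalg[OF F measurable_prob_algebraD[OF K]]
    by (simp add: Mw_def cong: measurable_cong_sets)
  have "distr Mw borel X = Mw \<bind> K"
  proof (rule measure_eqI)
    fix B :: "real set" assume "B \<in> sets (distr Mw borel X)"
    then have B[measurable]: "B \<in> sets borel" by simp
    have "X -` B \<inter> space M \<in> sets M" by simp
    then have "emeasure (distr Mw borel X) B = (\<integral>\<^sup>+\<omega>. w \<omega> * indicator (X -` B \<inter> space M) \<omega> \<partial>M)"
      by (simp add: Mw_def emeasure_distr emeasure_density)
    also have "\<dots> = (\<integral>\<^sup>+\<omega>. w \<omega> * indicator B (X \<omega>) \<partial>M)"
      by (intro nn_integral_cong) (simp add: indicator_def)
    also have "\<dots> = (\<integral>\<^sup>+\<omega>. w \<omega> * nn_cond_exp M F (\<lambda>\<omega>. indicator B (X \<omega>)) \<omega> \<partial>M)"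
      by (intro nn_cond_exp_intg[symmetric]) (auto simp: w)
    also have "\<dots> = (\<integral>\<^sup>+\<omega>. emeasure (K \<omega>) B \<partial>Mw)"
      unfolding Mw_def using has_cond_law_nn_cond_exp[OF M F _ K law B]
      by (subst nn_integral_density) (auto intro!: nn_integral_cong_AE)
    also have "\<dots> = emeasure (Mw \<bind> K) B"
      by (rule emeasure_bind[OF Mw_nonempty K_Mw B, symmetric])
    finally show "emeasure (distr Mw borel X) B = emeasure (Mw \<bind> K) B" .
  qed (simp add: sets_bind[OF sets_kernel[OF K_Mw] Mw_nonempty])
  then have "(\<integral>\<^sup>+x. g x \<partial>distr Mw borel X) = (\<integral>\<^sup>+\<omega>. \<integral>\<^sup>+x. g x \<partial>K \<omega> \<partial>Mw)"
    by (simp add: nn_integral_bind[OF g K_Mw])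
  moreover have "(\<integral>\<^sup>+x. g x \<partial>distr Mw borel X) = (\<integral>\<^sup>+\<omega>. g (X \<omega>) \<partial>Mw)"
    by (rule nn_integral_distr) (simp_all add: Mw_def)
  ultimately show ?thesis
    unfolding Mw_def using borel_measurable_nn_integral_kernel[OF K g]
    by (simp add: nn_integral_density measurable_from_subalg[OF F])
qed

lemma nn_integral_density_on_subalgebra:
  assumes F_M: "subalgebra M F" and F_Q: "subalgebra Q F" and D[measurable]: "D \<in> borel_measurable F"
    and Q: "\<And>A. A \<in> sets F \<Longrightarrow> emeasure Q A = (\<integral>\<^sup>+\<omega>\<in>A. D \<omega> \<partial>M)"
    and f[measurable]: "f \<in> borel_measurable F"
  shows "(\<integral>\<^sup>+\<omega>. f \<omega> \<partial>Q) = (\<integral>\<^sup>+\<omega>. D \<omega> * f \<omega> \<partial>M)"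
proof -
  have restr: "restr_to_subalg Q F = density (restr_to_subalg M F) D"
  proof (rule measure_eqI)
    fix A assume "A \<in> sets (restr_to_subalg Q F)"
    then have A[measurable]: "A \<in> sets F" by (simp add: sets_restr_to_subalg F_Q)
    have "emeasure (restr_to_subalg Q F) A = (\<integral>\<^sup>+\<omega>\<in>A. D \<omega> \<partial>M)"
      by (simp add: emeasure_restr_to_subalg[OF F_Q A] Q[OF A])
    also have "\<dots> = (\<integral>\<^sup>+\<omega>. D \<omega> * indicator A \<omega> \<partial>restr_to_subalg M F)"
      by (rule nn_integral_subalgebra2[OF F_M, symmetric]) measurable
    also have "\<dots> = emeasure (density (restr_to_subalg M F) D) A"
      by (rule emeasure_density[symmetric])
         (simp_all add: sets_restr_to_subalg F_M measurable_in_subalg[OF F_M D])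
    finally show "emeasure (restr_to_subalg Q F) A = emeasure (density (restr_to_subalg M F) D) A" .
  qed (simp add: sets_restr_to_subalg F_Q F_M)
  have "(\<integral>\<^sup>+\<omega>. f \<omega> \<partial>Q) = (\<integral>\<^sup>+\<omega>. f \<omega> \<partial>restr_to_subalg Q F)"
    by (rule nn_integral_subalgebra2[OF F_Q, symmetric]) measurable
  also have "\<dots> = (\<integral>\<^sup>+\<omega>. D \<omega> * f \<omega> \<partial>restr_to_subalg M F)"
    unfolding restr by (rule nn_integral_density) (simp_all add: measurable_in_subalg[OF F_M])
  also have "\<dots> = (\<integral>\<^sup>+\<omega>. D \<omega> * f \<omega> \<partial>M)"
    by (rule nn_integral_subalgebra2[OF F_M]) measurable
  finally show ?thesis .
qed

section \<open>Independence\<close>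

lemma measurable_id_subalgebra: "subalgebra M G \<Longrightarrow> (\<lambda>x. x) \<in> M \<rightarrow>\<^sub>M G"
proof (rule measurableI)
  fix A assume "subalgebra M G" "A \<in> sets G"
  then have "A \<in> sets M" "A \<subseteq> space M" using sets.sets_into_space[of A G] by (auto simp: subalgebra_def)
  then show "(\<lambda>x. x) -` A \<inter> space M \<in> sets M" by (simp add: Int_absorb2)
qed (simp add: subalgebra_def)

lemma distr_Pair_indep_set:
  assumes M: "prob_space M" and G: "subalgebra M G" and Z[measurable]: "Z \<in> borel_measurable M"
    and indep: "prob_space.indep_set M (sets G) {Z -` B \<inter> space M | B. B \<in> sets borel}"
  shows "distr M G (\<lambda>x. x) \<Otimes>\<^sub>M distr M lborel Z = distr M (G \<Otimes>\<^sub>M lborel) (\<lambda>x. (x, Z x))"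
proof -
  interpret prob_space M by (rule M)
  note id_G = measurable_id_subalgebra[OF G]
  interpret N: prob_space "distr M lborel Z" by (rule prob_space_distr) simp
  interpret MG: prob_space "distr M G (\<lambda>x. x)" by (rule prob_space_distr[OF id_G])
  have pair[measurable]: "(\<lambda>x. (x, Z x)) \<in> M \<rightarrow>\<^sub>M G \<Otimes>\<^sub>M lborel"
    by (auto intro!: measurable_Pair id_G)
  show ?thesis
  proof (rule pair_measure_eqI)
    show "sigma_finite_measure (distr M G (\<lambda>x. x))" "sigma_finite_measure (distr M lborel Z)"
      by unfold_locales
    show "sets (distr M G (\<lambda>x. x) \<Otimes>\<^sub>M distr M lborel Z) = sets (distr M (G \<Otimes>\<^sub>M lborel) (\<lambda>x. (x, Z x)))"
      by (simp cong: sets_pair_measure_cong)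
  next
    fix A B assume "A \<in> sets (distr M G (\<lambda>x. x))" "B \<in> sets (distr M lborel Z)"
    then have A: "A \<in> sets G" and [measurable]: "B \<in> sets borel" by simp_all
    have A_M: "A \<in> sets M" "A \<subseteq> space M"
      using A G sets.sets_into_space[of A G] by (auto simp: subalgebra_def)
    have "emeasure (distr M (G \<Otimes>\<^sub>M lborel) (\<lambda>x. (x, Z x))) (A \<times> B)
        = emeasure M (A \<inter> (Z -` B \<inter> space M))"
      using A A_M by (subst emeasure_distr) (auto intro!: arg_cong[where f="emeasure M"])
    also have "\<dots> = emeasure M A * emeasure M (Z -` B \<inter> space M)"
    proof -
      have "prob (A \<inter> (Z -` B \<inter> space M)) = prob A * prob (Z -` B \<inter> space M)"
        using \<open>B \<in> sets borel\<close> by (intro indep_setD[OF indep A]) blast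
      then show ?thesis
        by (simp only: emeasure_eq_measure ennreal_mult[OF measure_nonneg measure_nonneg])
    qed
    also have "\<dots> = emeasure (distr M G (\<lambda>x. x)) A * emeasure (distr M lborel Z) B"
      using A A_M by (simp add: emeasure_distr[OF id_G] Int_absorb2 emeasure_distr)
    finally show "emeasure (distr M G (\<lambda>x. x)) A * emeasure (distr M lborel Z) B
        = emeasure (distr M (G \<Otimes>\<^sub>M lborel) (\<lambda>x. (x, Z x))) (A \<times> B)" ..
  qed
qed

lemma nn_integral_indep_pair:
  assumes M: "prob_space M" and G: "subalgebra M G" and Z[measurable]: "Z \<in> borel_measurable M"
    and indep: "prob_space.indep_set M (sets G) {Z -` B \<inter> space M | B. B \<in> sets borel}"
    and f[measurable]: "f \<in> borel_measurable (G \<Otimes>\<^sub>M borel)"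
  shows "(\<integral>\<^sup>+\<omega>. f (\<omega>, Z \<omega>) \<partial>M) = (\<integral>\<^sup>+\<omega>. \<integral>\<^sup>+z. f (\<omega>, z) \<partial>distr M lborel Z \<partial>M)"
proof -
  define N where "N = distr M lborel Z"
  define MG where "MG = distr M G (\<lambda>x. x)"
  note id_G = measurable_id_subalgebra[OF G]
  interpret N: prob_space N unfolding N_def using M by (rule prob_space.prob_space_distr) simp
  have pair: "(\<lambda>x. (x, Z x)) \<in> M \<rightarrow>\<^sub>M G \<Otimes>\<^sub>M lborel"
    by (auto intro!: measurable_Pair id_G)
  note joint_law = distr_Pair_indep_set[OF M G Z indep, folded MG_def N_def]
  have sets_MGN: "sets (MG \<Otimes>\<^sub>M N) = sets (G \<Otimes>\<^sub>M borel)"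
    by (rule sets_pair_measure_cong) (simp_all add: MG_def N_def)
  have f_MGN: "f \<in> borel_measurable (MG \<Otimes>\<^sub>M N)"
    unfolding measurable_cong_sets[OF sets_MGN refl] by (rule f)
  have "(\<integral>\<^sup>+\<omega>. f (\<omega>, Z \<omega>) \<partial>M) = (\<integral>\<^sup>+p. f p \<partial>MG \<Otimes>\<^sub>M N)"
    unfolding joint_law
    by (rule nn_integral_distr[symmetric, OF pair], unfold measurable_distr_eq1)
       (use f_MGN[unfolded joint_law measurable_distr_eq1] in simp)
  also have "\<dots> = (\<integral>\<^sup>+\<omega>. \<integral>\<^sup>+z. f (\<omega>, z) \<partial>N \<partial>MG)"
    by (rule N.nn_integral_fst[symmetric, OF f_MGN])
  also have "\<dots> = (\<integral>\<^sup>+\<omega>. \<integral>\<^sup>+z. f (\<omega>, z) \<partial>N \<partial>M)"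
    using N.borel_measurable_nn_integral_fst[OF f_MGN] unfolding MG_def
    by (rule nn_integral_distr[OF id_G])
  finally show ?thesis unfolding N_def .
qed

lemma emeasure_Collect_if_indep_of_past:
  fixes Z :: "int \<Rightarrow> 'a \<Rightarrow> real" and F :: "int \<Rightarrow> 'a measure"
  assumes Q: "prob_space Q" and F: "\<And>t. subalgebra Q (F t)"
    and adapted: "\<And>u t. u \<le> t \<Longrightarrow> Z u \<in> borel_measurable (F t)"
    and step: "\<And>t A B. 0 \<le> t \<Longrightarrow> A \<in> sets (F t) \<Longrightarrow> B \<in> sets borel \<Longrightarrow>
      emeasure Q (A \<inter> Z (t + 1) -` B) = emeasure Q A * emeasure N B"
    and "J \<subseteq> {1..int n}" "\<forall>j\<in>J. B j \<in> sets borel"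
  shows "emeasure Q {\<omega>\<in>space Q. \<forall>j\<in>J. Z j \<omega> \<in> B j} = (\<Prod>j\<in>J. emeasure N (B j))"
  using assms(5,6)
proof (induction n arbitrary: J)
  case 0
  then show ?case by (simp add: prob_space.emeasure_space_1[OF Q])
next
  case (Suc n)
  have space_F: "space (F t) = space Q" for t using F by (simp add: subalgebra_def)
  define J' where "J' = J - {int n + 1}"
  have "finite J'" using Suc.prems finite_subset[of _ "{1..int (Suc n)}"] by (auto simp: J'_def)
  have J': "J' \<subseteq> {1..int n}" using Suc.prems by (auto simp: J'_def)
  have IH: "emeasure Q {\<omega>\<in>space Q. \<forall>j\<in>J'. Z j \<omega> \<in> B j} = (\<Prod>j\<in>J'. emeasure N (B j))"
    using Suc.IH[OF J'] Suc.prems by (auto simp: J'_def)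
  show ?case
  proof (cases "int n + 1 \<in> J")
    case False
    then show ?thesis using IH by (simp add: J'_def)
  next
    case True
    have past: "{\<omega>\<in>space Q. \<forall>j\<in>J'. Z j \<omega> \<in> B j} \<in> sets (F (int n))"
      unfolding space_F[symmetric, of "int n"]
    proof (rule sets.sets_Collect_finite_All)
      fix j assume "j \<in> J'"
      then have "Z j \<in> borel_measurable (F (int n))" "B j \<in> sets borel"
        using J' Suc.prems adapted by (auto simp: J'_def)
      from measurable_sets[OF this]
      show "{\<omega> \<in> space (F (int n)). Z j \<omega> \<in> B j} \<in> sets (F (int n))"
        by (simp add: Int_def conj_commute)
    qed (fact \<open>finite J'\<close>)
    have "{\<omega>\<in>space Q. \<forall>j\<in>J. Z j \<omega> \<in> B j}
        = {\<omega>\<in>space Q. \<forall>j\<in>J'. Z j \<omega> \<in> B j} \<inter> Z (int n + 1) -` B (int n + 1)"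
      using True by (auto simp: J'_def)
    then have "emeasure Q {\<omega>\<in>space Q. \<forall>j\<in>J. Z j \<omega> \<in> B j}
        = (\<Prod>j\<in>J'. emeasure N (B j)) * emeasure N (B (int n + 1))"
      using step[OF _ past, of "B (int n + 1)"] True Suc.prems IH by simp
    then show ?thesis
      using True \<open>finite J'\<close> by (simp add: J'_def prod.remove[of J "int n + 1"] mult.commute)
  qed
qed

lemma indep_vars_if_indep_of_past:
  fixes Z :: "int \<Rightarrow> 'a \<Rightarrow> real" and F :: "int \<Rightarrow> 'a measure"
  assumes Q: "prob_space Q" and F: "\<And>t. subalgebra Q (F t)"
    and adapted: "\<And>u t. u \<le> t \<Longrightarrow> Z u \<in> borel_measurable (F t)"
    and step: "\<And>t A B. 0 \<le> t \<Longrightarrow> A \<in> sets (F t) \<Longrightarrow> B \<in> sets borel \<Longrightarrow>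
      emeasure Q (A \<inter> Z (t + 1) -` B) = emeasure Q A * emeasure N B"
  shows "prob_space.indep_vars Q (\<lambda>_. borel) Z {1..}"
  unfolding prob_space.indep_vars_def2[OF Q]
proof (intro conjI ballI prob_space.indep_setsI[OF Q])
  interpret prob_space Q by (rule Q)
  have space_F: "space (F t) = space Q" for t using F by (simp add: subalgebra_def)
  have Z_Q[measurable]: "Z u \<in> borel_measurable Q" for u
    using measurable_from_subalg[OF F adapted[OF order_refl]] .
  fix i show "Z i \<in> borel_measurable Q" "{Z i -` B \<inter> space Q |B. B \<in> sets borel} \<subseteq> events" by auto
next
  interpret prob_space Q by (rule Q)
  fix A J assume ne: "J \<noteq> {}" and J: "J \<subseteq> {1..}" "finite J"
    and A: "\<forall>j\<in>J. A j \<in> {Z j -` B \<inter> space Q |B. B \<in> sets borel}"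
  then have "\<forall>j\<in>J. \<exists>C. C \<in> sets borel \<and> A j = Z j -` C \<inter> space Q" by auto
  then obtain B where B: "\<forall>j\<in>J. B j \<in> sets borel \<and> A j = Z j -` B j \<inter> space Q"
    by (rule bchoice[THEN exE]) blast
  have J_sub: "J \<subseteq> {1..int (nat (Max J))}"
  proof
    fix j assume "j \<in> J"
    then have "1 \<le> j" "j \<le> Max J" using J Max_ge[OF J(2)] by auto
    then show "j \<in> {1..int (nat (Max J))}" by simp
  qed
  have factors: "emeasure N (B j) = emeasure Q (A j)" if "j \<in> J" for j
  proof -
    have "space (F (j - 1)) = space Q" using F by (simp add: subalgebra_def)
    then have top: "space Q \<in> sets (F (j - 1))" using sets.top[of "F (j - 1)"] by simp
    have j: "0 \<le> j - 1" "j - 1 + 1 = j" using J that by auto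
    have "emeasure Q (space Q \<inter> Z j -` B j) = emeasure N (B j)"
      using step[OF j(1) top, of "B j"] B that by (simp add: j(2) emeasure_space_1)
    then show ?thesis using B that by (simp add: Int_commute)
  qed
  have inter: "(\<Inter>j\<in>J. A j) = {\<omega>\<in>space Q. \<forall>j\<in>J. Z j \<omega> \<in> B j}"
    using B ne by auto
  have B_borel: "\<forall>j\<in>J. B j \<in> sets borel" using B by blast
  have "emeasure Q (\<Inter>j\<in>J. A j) = (\<Prod>j\<in>J. emeasure N (B j))"
    unfolding inter
    by (rule emeasure_Collect_if_indep_of_past[where Q=Q and F=F and Z=Z, OF Q F adapted step J_sub B_borel])
  also have "\<dots> = (\<Prod>j\<in>J. emeasure Q (A j))" by (rule prod.cong) (simp_all add: factors)
  finally show "prob (\<Inter>j\<in>J. A j) = (\<Prod>j\<in>J. prob (A j))"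
    by (simp add: emeasure_eq_measure prod_ennreal prod_nonneg)
qed

lemma Int_stable_vimage: "Int_stable {X -` B \<inter> \<Omega> | B. B \<in> sets N}"
proof (rule Int_stableI)
  fix a b assume "a \<in> {X -` B \<inter> \<Omega> | B. B \<in> sets N}" "b \<in> {X -` B \<inter> \<Omega> | B. B \<in> sets N}"
  then obtain B1 B2 where "B1 \<in> sets N" "B2 \<in> sets N" "a = X -` B1 \<inter> \<Omega>" "b = X -` B2 \<inter> \<Omega>"
    by blast
  then show "a \<inter> b \<in> {X -` B \<inter> \<Omega> | B. B \<in> sets N}" by (intro CollectI exI[of _ "B1 \<inter> B2"]) auto
qed

lemma Int_stable_Int_vimage: "Int_stable {A \<inter> X -` C | A C. A \<in> sets F \<and> C \<in> sets N}"
proof (rule Int_stableI)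
  fix a b assume "a \<in> {A \<inter> X -` C | A C. A \<in> sets F \<and> C \<in> sets N}"
    "b \<in> {A \<inter> X -` C | A C. A \<in> sets F \<and> C \<in> sets N}"
  then obtain A1 C1 A2 C2 where "a = A1 \<inter> X -` C1" "A1 \<in> sets F" "C1 \<in> sets N"
    "b = A2 \<inter> X -` C2" "A2 \<in> sets F" "C2 \<in> sets N"
    by blast
  then show "a \<inter> b \<in> {A \<inter> X -` C | A C. A \<in> sets F \<and> C \<in> sets N}"
    by (intro CollectI exI[of _ "A1 \<inter> A2"] exI[of _ "C1 \<inter> C2"]) auto
qed

lemma sets_sigma_Un_vimage_subset:
  fixes X :: "'a \<Rightarrow> 'b :: topological_space"
  assumes F: "subalgebra Q F"
  shows "sets (sigma (space Q) (sets F \<union> {X -` C \<inter> space Q | C. C \<in> sets borel}))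
    \<subseteq> sigma_sets (space Q) {A \<inter> X -` C | A C. A \<in> sets F \<and> C \<in> sets borel}"
proof -
  have space_F: "space F = space Q" using F by (simp add: subalgebra_def)
  have "sets F \<union> {X -` C \<inter> space Q | C. C \<in> sets borel} \<subseteq> {A \<inter> X -` C | A C. A \<in> sets F \<and> C \<in> sets borel}"
  proof
    fix a assume "a \<in> sets F \<union> {X -` C \<inter> space Q | C. C \<in> sets borel}"
    then show "a \<in> {A \<inter> X -` C | A C. A \<in> sets F \<and> C \<in> sets borel}"
    proof
      assume "a \<in> sets F"
      then show ?thesis by (intro CollectI exI[of _ a] exI[of _ UNIV]) auto
    next
      assume "a \<in> {X -` C \<inter> space Q | C. C \<in> sets borel}"
      then obtain C where "C \<in> sets borel" "a = space Q \<inter> X -` C" by auto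
      moreover have "space Q \<in> sets F" using sets.top[of F] space_F by simp
      ultimately show ?thesis by (intro CollectI exI[of _ "space Q"] exI[of _ C]) simp
    qed
  qed
  moreover have "sets F \<union> {X -` C \<inter> space Q | C. C \<in> sets borel} \<subseteq> Pow (space Q)"
    using F sets.sets_into_space[of _ F] by (auto simp: subalgebra_def)
  ultimately show ?thesis
    by (simp add: sets_measure_of sigma_sets_mono')
qed

lemma indep_set_sigma_vimage_Un:
  fixes X Z :: "'a \<Rightarrow> real"
  assumes Q: "prob_space Q" and F: "subalgebra Q F"
    and X[measurable]: "X \<in> borel_measurable Q" and Z[measurable]: "Z \<in> borel_measurable Q"
    and product: "\<And>A C B. A \<in> sets F \<Longrightarrow> C \<in> sets borel \<Longrightarrow> B \<in> sets borel \<Longrightarrow>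
      emeasure Q (A \<inter> X -` C \<inter> Z -` B) = emeasure Q (A \<inter> X -` C) * emeasure Q (Z -` B \<inter> space Q)"
  shows "prob_space.indep_set Q
      (sets (sigma (space Q) (sets F \<union> {X -` C \<inter> space Q | C. C \<in> sets borel})))
      {Z -` B \<inter> space Q | B. B \<in> sets borel}"
proof -
  interpret prob_space Q by (rule Q)
  define P where "P = {A \<inter> X -` C | A C. A \<in> sets F \<and> C \<in> sets (borel :: real measure)}"
  define E where "E = {Z -` B \<inter> space Q | B. B \<in> sets (borel :: real measure)}"
  have A_space: "A \<subseteq> space Q" and A_events[measurable]: "A \<in> events" if "A \<in> sets F" for A
    using that F sets.sets_into_space[of A F] by (auto simp: subalgebra_def)
  have "indep_set P E"
  proof (rule indep_setI)
    fix a b assume "a \<in> P" "b \<in> E"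
    then obtain A C B where a: "a = A \<inter> X -` C" and A: "A \<in> sets F" and C: "C \<in> sets borel"
      and b: "b = Z -` B \<inter> space Q" and B: "B \<in> sets borel"
      unfolding P_def E_def by blast
    have "a \<inter> b = A \<inter> X -` C \<inter> Z -` B" using a b A_space[OF A] by auto
    then have "emeasure Q (a \<inter> b) = emeasure Q a * emeasure Q b"
      using product[OF A C B] a b by simp
    then show "prob (a \<inter> b) = prob a * prob b"
      by (simp add: emeasure_eq_measure ennreal_mult[symmetric])
  next
    show "P \<subseteq> events"
    proof
      fix a assume "a \<in> P"
      then obtain A C where "a = A \<inter> X -` C" "A \<in> sets F" "C \<in> sets borel"
        unfolding P_def by blast
      then have "a = A \<inter> (X -` C \<inter> space Q)" "A \<in> events" "C \<in> sets borel"
        using A_space A_events by auto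
      then show "a \<in> events" by simp
    qed
  qed (auto simp: E_def)
  then have "indep_set (sigma_sets (space Q) P) (sigma_sets (space Q) E)"
    unfolding P_def E_def by (intro indep_set_sigma_sets Int_stable_vimage Int_stable_Int_vimage)
  moreover note sets_sigma_Un_vimage_subset[OF F, of X, folded P_def]
  moreover have "E \<subseteq> sigma_sets (space Q) E" by (auto intro: sigma_sets.Basic)
  ultimately show ?thesis
    unfolding indep_set_def E_def[symmetric]
    by (elim indep_sets_mono_sets) (simp split: bool.split)
qed

section \<open>The LHARG filtration\<close>

lemma filt_eq_sigma:
  "filt M eps RV t = sigma (space M)
     (\<Union>X\<in>{eps u | u. u \<le> t} \<union> {RV u | u. u \<le> t}. {X -` B \<inter> space M | B. B \<in> sets borel})"
  unfolding filt_def gen_sigma_def ..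

lemma space_filt[simp]: "space (filt M eps RV t) = space M"
  unfolding filt_eq_sigma by (simp add: space_measure_of_conv)

lemma sets_filt:
  "sets (filt M eps RV t) = sigma_sets (space M)
     (\<Union>X\<in>{eps u | u. u \<le> t} \<union> {RV u | u. u \<le> t}. {X -` B \<inter> space M | B. B \<in> sets borel})"
  unfolding filt_eq_sigma by (rule sets_measure_of) auto

lemma sets_filt_mono: "s \<le> t \<Longrightarrow> sets (filt M eps RV s) \<subseteq> sets (filt M eps RV t)"
  unfolding sets_filt by (intro sigma_sets_subseteq UN_mono) auto

lemma subalgebra_filt:
  assumes "\<And>u. eps u \<in> borel_measurable M" "\<And>u. RV u \<in> borel_measurable M"
  shows "subalgebra M (filt M eps RV t)"
  unfolding subalgebra_def sets_filt using assms by (auto intro!: sets.sigma_sets_subset)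

lemma filt_measurable:
  assumes "X \<in> {eps u | u. u \<le> t} \<union> {RV u | u. u \<le> t}"
  shows "X \<in> borel_measurable (filt M eps RV t)"
proof (rule measurableI)
  fix B :: "real set" assume "B \<in> sets borel"
  then have "X -` B \<inter> space M
      \<in> (\<Union>X\<in>{eps u | u. u \<le> t} \<union> {RV u | u. u \<le> t}. {X -` B \<inter> space M | B. B \<in> sets borel})"
    using assms by blast
  then show "X -` B \<inter> space (filt M eps RV t) \<in> sets (filt M eps RV t)"
    unfolding sets_filt by (auto intro: sigma_sets.Basic)
qed auto

lemma measurable_filt_eps: "u \<le> t \<Longrightarrow> eps u \<in> borel_measurable (filt M eps RV t)"
  by (rule filt_measurable) blast

lemma measurable_filt_RV: "u \<le> t \<Longrightarrow> RV u \<in> borel_measurable (filt M eps RV t)"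
  by (rule filt_measurable) blast

section \<open>The LHARG model under the risk-neutral measure\<close>

locale lharg_risk_neutral =
  fixes M Q :: "'a measure"
    and eps RV y :: "int \<Rightarrow> 'a \<Rightarrow> real"
    and r lam \<delta> \<theta> d \<gamma> \<nu>1 \<nu>2 :: real
    and p q :: nat
    and \<beta> \<alpha> :: "nat \<Rightarrow> real"
  assumes M: "prob_space M"
    and \<delta>_pos: "\<delta> > 0" and \<theta>_pos: "\<theta> > 0" and d_nonneg: "d \<ge> 0"
    and \<beta>_nonneg: "\<forall>i\<in>{1..p}. \<beta> i \<ge> 0" and \<alpha>_nonneg: "\<forall>j\<in>{1..q}. \<alpha> j \<ge> 0"
    and model: "lharg M (filt M eps RV) eps RV y r lam \<delta> \<theta> d \<gamma> p q \<beta> \<alpha>"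
    and Q: "prob_space Q" and sets_Q: "sets Q = sets M"
    and Q_density: "\<forall>T\<ge>0. \<forall>A\<in>sets (filt M eps RV T).
      emeasure Q A = (\<integral>\<^sup>+ \<omega>\<in>A. (\<Prod>s\<in>{0..<T}. sdf M (filt M eps RV) RV y \<nu>1 \<nu>2 s \<omega>) \<partial>M)"
    and no_arbitrage: "\<nu>2 = lam + 1/2"
    and tilt_pos: "1 - \<theta> * (- lam\<^sup>2 / 2 - \<nu>1 + 1/8) > 0"
begin

abbreviation F :: "int \<Rightarrow> 'a measure" where "F t \<equiv> filt M eps RV t"

abbreviation \<Theta> :: "int \<Rightarrow> 'a \<Rightarrow> real" where "\<Theta> t \<equiv> lharg_Theta d \<beta> \<alpha> \<gamma> p q RV eps t"

definition Y_star :: real where "Y_star = - lam\<^sup>2 / 2 - \<nu>1 + 1/8"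

definition \<kappa> :: real where "\<kappa> = 1 / (1 - \<theta> * Y_star)"

definition eps_star :: "int \<Rightarrow> 'a \<Rightarrow> real" where
  "eps_star t \<omega> = eps t \<omega> + \<nu>2 * sqrt (RV t \<omega>)"

lemma RV_pos: "\<omega> \<in> space M \<Longrightarrow> RV t \<omega> > 0"
  using model unfolding lharg_def by blast

lemma eps_measurable[measurable]: "eps t \<in> borel_measurable M"
  using model unfolding lharg_def by blast

lemma RV_measurable[measurable]: "RV t \<in> borel_measurable M"
  using model unfolding lharg_def by blast

lemma distr_eps: "t \<ge> 1 \<Longrightarrow> distr M lborel (eps t) = std_normal"
  using model unfolding lharg_def distributed_def by blast

lemma eps_indep: "t \<ge> 0 \<Longrightarrow> prob_space.indep_set M
    (sets (sigma (space M) (sets (F t) \<union> {RV (t + 1) -` B \<inter> space M | B. B \<in> sets borel})))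
    {eps (t + 1) -` B \<inter> space M | B. B \<in> sets borel}"
  using model unfolding lharg_def by blast

lemma y_eq: "\<omega> \<in> space M \<Longrightarrow>
    y (t + 1) \<omega> = r + lam * RV (t + 1) \<omega> + sqrt (RV (t + 1) \<omega>) * eps (t + 1) \<omega>"
  using model unfolding lharg_def by blast

lemma RV_cond_law: "t \<ge> 0 \<Longrightarrow> has_cond_law M (F t) (RV (t + 1)) (\<lambda>\<omega>. ncgamma \<delta> (\<Theta> t \<omega>) \<theta>)"
  using model unfolding lharg_def by blast

lemma subalgebra_F: "subalgebra M (F t)"
  by (rule subalgebra_filt) simp_all

lemma space_Q[simp]: "space Q = space M"
  using sets_eq_imp_space_eq[OF sets_Q] .

lemma subalgebra_Q_F: "subalgebra Q (F t)"
  using subalgebra_F by (simp add: subalgebra_def sets_Q)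

lemma measurable_Q_iff: "f \<in> borel_measurable Q \<longleftrightarrow> f \<in> borel_measurable M"
  using measurable_cong_sets[OF sets_Q refl] by blast

lemma measurable_F_mono: "s \<le> t \<Longrightarrow> f \<in> borel_measurable (F s) \<Longrightarrow> f \<in> borel_measurable (F t)"
  using measurable_from_subalg[of "F t" "F s"] sets_filt_mono[of s t M eps RV]
  by (auto simp: subalgebra_def)

lemma measurable_F_M: "f \<in> borel_measurable (F t) \<Longrightarrow> f \<in> borel_measurable M"
  using measurable_from_subalg[OF subalgebra_F] by blast

lemma Theta_measurable: "\<Theta> t \<in> borel_measurable (F t)"
proof -
  have [measurable]: "eps u \<in> borel_measurable (F t)" "RV u \<in> borel_measurable (F t)"
    if "u \<le> t" for u
    using that by (simp_all add: measurable_filt_eps measurable_filt_RV)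
  show ?thesis unfolding lharg_Theta_def[abs_def] by measurable
qed

lemma Theta_nonneg: "\<omega> \<in> space M \<Longrightarrow> \<Theta> t \<omega> \<ge> 0"
  unfolding lharg_Theta_def using d_nonneg \<beta>_nonneg \<alpha>_nonneg RV_pos
  by (intro add_nonneg_nonneg sum_nonneg mult_nonneg_nonneg) (auto intro: less_imp_le)

lemma \<kappa>_pos: "\<kappa> > 0"
  using tilt_pos unfolding \<kappa>_def Y_star_def by simp

lemma ncgamma_Theta_prob_algebra:
  "c > 0 \<Longrightarrow> (\<lambda>\<omega>. ncgamma \<delta> (c * \<Theta> t \<omega>) (c * \<theta>)) \<in> F t \<rightarrow>\<^sub>M prob_algebra borel"
  using Theta_measurable Theta_nonneg \<delta>_pos \<theta>_pos
  by (intro measurable_ncgamma_prob_algebra) auto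

lemma nn_integral_next_step:
  assumes t: "t \<ge> 0" and w: "w \<in> borel_measurable (F t)"
    and h[measurable]: "h \<in> borel_measurable (borel \<Otimes>\<^sub>M borel)"
  shows "(\<integral>\<^sup>+\<omega>. w \<omega> * h (RV (t + 1) \<omega>, eps (t + 1) \<omega>) \<partial>M)
       = (\<integral>\<^sup>+\<omega>. w \<omega> * (\<integral>\<^sup>+x. \<integral>\<^sup>+z. h (x, z) \<partial>std_normal \<partial>ncgamma \<delta> (\<Theta> t \<omega>) \<theta>) \<partial>M)"
proof -
  define R where "R = {RV (t + 1) -` B \<inter> space M | B. B \<in> sets borel}"
  define G where "G = sigma (space M) (sets (F t) \<union> R)"
  have gen: "sets (F t) \<union> R \<subseteq> sets M"
    using subalgebra_F by (auto simp: subalgebra_def R_def)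
  then have sets_G: "sets G = sigma_sets (space M) (sets (F t) \<union> R)"
    unfolding G_def using sets.sets_into_space by (intro sets_measure_of) blast
  have space_G: "space G = space M" unfolding G_def by (simp add: space_measure_of_conv)
  have G: "subalgebra M G"
    unfolding subalgebra_def sets_G space_G using gen by (simp add: sets.sigma_sets_subset)
  have "subalgebra G (F t)"
    unfolding subalgebra_def sets_G space_G by (auto intro: sigma_sets.Basic)
  from measurable_from_subalg[OF this w] have [measurable]: "w \<in> borel_measurable G" .
  have [measurable]: "RV (t + 1) \<in> borel_measurable G"
  proof (rule measurableI)
    fix B :: "real set" assume "B \<in> sets borel"
    then have "RV (t + 1) -` B \<inter> space M \<in> R" unfolding R_def by blast
    then show "RV (t + 1) -` B \<inter> space G \<in> sets G" unfolding sets_G space_G by (auto intro: sigma_sets.Basic)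
  qed (simp add: space_G)
  have law: "distr M lborel (eps (t + 1)) = std_normal" using t by (intro distr_eps) simp
  have "(\<integral>\<^sup>+\<omega>. w \<omega> * h (RV (t + 1) \<omega>, eps (t + 1) \<omega>) \<partial>M)
      = (\<integral>\<^sup>+\<omega>. \<integral>\<^sup>+z. w \<omega> * h (RV (t + 1) \<omega>, z) \<partial>std_normal \<partial>M)"
    using nn_integral_indep_pair[OF M G eps_measurable eps_indep[OF t, folded R_def G_def],
        of "\<lambda>(\<omega>, z). w \<omega> * h (RV (t + 1) \<omega>, z)"]
    by (simp add: law)
  also have "\<dots> = (\<integral>\<^sup>+\<omega>. w \<omega> * (\<integral>\<^sup>+z. h (RV (t + 1) \<omega>, z) \<partial>std_normal) \<partial>M)"
    by (intro nn_integral_cong nn_integral_cmult) simp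
  also have "\<dots> = (\<integral>\<^sup>+\<omega>. w \<omega> * (\<integral>\<^sup>+x. \<integral>\<^sup>+z. h (x, z) \<partial>std_normal \<partial>ncgamma \<delta> (\<Theta> t \<omega>) \<theta>) \<partial>M)"
    using nn_integral_has_cond_law[OF M subalgebra_F RV_measurable
        ncgamma_Theta_prob_algebra[of 1, simplified] RV_cond_law[OF t] w
        borel_measurable_nn_integral_std_normal[OF h]] .
  finally show ?thesis .
qed

definition pricing_kernel :: "real \<Rightarrow> real \<Rightarrow> real" where
  "pricing_kernel x z = exp (- \<nu>1 * x - \<nu>2 * (r + lam * x + sqrt x * z))"

definition sdf_denominator :: "real \<Rightarrow> real" where
  "sdf_denominator \<Theta>' = exp (- \<nu>2 * r) * \<kappa> powr \<delta> * exp ((\<kappa> - 1) * \<Theta>')"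

lemma sdf_denominator_pos: "sdf_denominator \<Theta>' > 0"
  unfolding sdf_denominator_def using \<kappa>_pos by simp

lemma borel_measurable_pricing_kernel:
  "(\<lambda>p. ennreal (pricing_kernel (fst p) (snd p))) \<in> borel_measurable (borel \<Otimes>\<^sub>M borel)"
  unfolding pricing_kernel_def by measurable

lemma nn_integral_std_normal_pricing_kernel:
  assumes "x > 0" and [measurable]: "g \<in> borel_measurable borel"
  shows "(\<integral>\<^sup>+z. ennreal (pricing_kernel x z) * g (z + \<nu>2 * sqrt x) \<partial>std_normal)
    = ennreal (exp (- \<nu>2 * r)) * (ennreal (exp (Y_star * x)) * (\<integral>\<^sup>+z. g z \<partial>std_normal))"
proof -
  define a where "a = \<nu>2 * sqrt x"
  define c where "c = exp (- \<nu>1 * x - \<nu>2 * r - \<nu>2 * lam * x)"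
  have "ennreal (pricing_kernel x z) = ennreal c * ennreal (exp (- a * z))" for z
    unfolding pricing_kernel_def c_def a_def
    by (simp add: ennreal_mult[symmetric] exp_add[symmetric] algebra_simps)
  then have "(\<integral>\<^sup>+z. ennreal (pricing_kernel x z) * g (z + \<nu>2 * sqrt x) \<partial>std_normal)
      = ennreal c * (\<integral>\<^sup>+z. ennreal (exp (- a * z)) * g (z + a) \<partial>std_normal)"
    by (simp add: a_def mult.assoc nn_integral_cmult)
  also have "\<dots> = ennreal c * (ennreal (exp (a\<^sup>2 / 2)) * (\<integral>\<^sup>+z. g z \<partial>std_normal))"
    using nn_integral_std_normal_exp_shift[of g a] by simp
  also have "\<dots> = ennreal (exp (- \<nu>2 * r)) * (ennreal (exp (Y_star * x)) * (\<integral>\<^sup>+z. g z \<partial>std_normal))"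
  proof -
    have "a\<^sup>2 = \<nu>2\<^sup>2 * x" unfolding a_def using assms by (simp add: power_mult_distrib)
    then have "c * exp (a\<^sup>2 / 2) = exp (- \<nu>2 * r) * exp (Y_star * x)"
      unfolding c_def Y_star_def no_arbitrage
      by (simp add: exp_add[symmetric] power2_eq_square algebra_simps)
    moreover have "c \<ge> 0" unfolding c_def by simp
    ultimately show ?thesis by (simp add: ennreal_mult[symmetric] mult.assoc[symmetric])
  qed
  finally show ?thesis .
qed

lemma nn_integral_pricing_kernel_tilt:
  assumes "\<Theta>' \<ge> 0" and [measurable]: "h \<in> borel_measurable (borel \<Otimes>\<^sub>M borel)"
  shows "(\<integral>\<^sup>+x. \<integral>\<^sup>+z. ennreal (pricing_kernel x z) * h (x, z + \<nu>2 * sqrt x) \<partial>std_normal \<partial>ncgamma \<delta> \<Theta>' \<theta>)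
    = ennreal (sdf_denominator \<Theta>') * (\<integral>\<^sup>+x. \<integral>\<^sup>+z. h (x, z) \<partial>std_normal \<partial>ncgamma \<delta> (\<kappa> * \<Theta>') (\<kappa> * \<theta>))"
proof -
  have g[measurable]: "(\<lambda>x. \<integral>\<^sup>+z. h (x, z) \<partial>std_normal) \<in> borel_measurable borel"
    by (rule borel_measurable_nn_integral_std_normal) simp
  have "(\<integral>\<^sup>+x. \<integral>\<^sup>+z. ennreal (pricing_kernel x z) * h (x, z + \<nu>2 * sqrt x) \<partial>std_normal \<partial>ncgamma \<delta> \<Theta>' \<theta>)
      = (\<integral>\<^sup>+x. ennreal (exp (- \<nu>2 * r)) *
          (ennreal (exp (Y_star * x)) * (\<integral>\<^sup>+z. h (x, z) \<partial>std_normal)) \<partial>ncgamma \<delta> \<Theta>' \<theta>)"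
  proof (rule nn_integral_cong_AE, rule AE_mp[OF AE_ncgamma_pos], rule AE_I2, rule impI)
    fix x :: real assume "x > 0"
    then show "(\<integral>\<^sup>+z. ennreal (pricing_kernel x z) * h (x, z + \<nu>2 * sqrt x) \<partial>std_normal)
        = ennreal (exp (- \<nu>2 * r)) * (ennreal (exp (Y_star * x)) * (\<integral>\<^sup>+z. h (x, z) \<partial>std_normal))"
      by (rule nn_integral_std_normal_pricing_kernel) simp
  qed
  also have "\<dots> = ennreal (exp (- \<nu>2 * r)) *
      (\<integral>\<^sup>+x. ennreal (exp (Y_star * x)) * (\<integral>\<^sup>+z. h (x, z) \<partial>std_normal) \<partial>ncgamma \<delta> \<Theta>' \<theta>)"
    by (rule nn_integral_cmult) measurable
  also have "\<dots> = ennreal (sdf_denominator \<Theta>') *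
      (\<integral>\<^sup>+x. \<integral>\<^sup>+z. h (x, z) \<partial>std_normal \<partial>ncgamma \<delta> (\<kappa> * \<Theta>') (\<kappa> * \<theta>))"
    using nn_integral_ncgamma_exp_tilt[OF tilt_pos[folded Y_star_def] \<kappa>_def \<theta>_pos \<delta>_pos assms(1) g]
      \<kappa>_pos unfolding sdf_denominator_def by (simp add: ennreal_mult mult.assoc)
  finally show ?thesis .
qed

lemma nn_integral_pricing_kernel:
  assumes "\<Theta>' \<ge> 0"
  shows "(\<integral>\<^sup>+x. \<integral>\<^sup>+z. ennreal (pricing_kernel x z) \<partial>std_normal \<partial>ncgamma \<delta> \<Theta>' \<theta>) = ennreal (sdf_denominator \<Theta>')"
proof -
  interpret N: prob_space std_normal by (rule prob_space_std_normal)
  interpret K: prob_space "ncgamma \<delta> (\<kappa> * \<Theta>') (\<kappa> * \<theta>)"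
    using \<kappa>_pos \<delta>_pos \<theta>_pos assms by (intro prob_space_ncgamma) auto
  show ?thesis
    using nn_integral_pricing_kernel_tilt[OF assms, of "\<lambda>_. 1"]
    by (simp add: N.emeasure_space_1[simplified] K.emeasure_space_1[simplified])
qed

definition sdf_numerator :: "int \<Rightarrow> 'a \<Rightarrow> ennreal" where
  "sdf_numerator s \<omega> = ennreal (exp (- \<nu>1 * RV (s + 1) \<omega> - \<nu>2 * y (s + 1) \<omega>))"

lemma sdf_eq: "sdf M (filt M eps RV) RV y \<nu>1 \<nu>2 s \<omega> = sdf_numerator s \<omega> / nn_cond_exp M (F s) (sdf_numerator s) \<omega>"
  unfolding sdf_def sdf_numerator_def[abs_def] ..

lemma sdf_numerator_eq:
  "\<omega> \<in> space M \<Longrightarrow> sdf_numerator s \<omega> = ennreal (pricing_kernel (RV (s + 1) \<omega>) (eps (s + 1) \<omega>))"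
  unfolding sdf_numerator_def pricing_kernel_def using y_eq by simp

lemma sdf_numerator_measurable: "sdf_numerator s \<in> borel_measurable (F (s + 1))"
proof -
  note [measurable] = measurable_filt_RV[of "s + 1" "s + 1"] measurable_filt_eps[of "s + 1" "s + 1"]
  have "(\<lambda>\<omega>. ennreal (pricing_kernel (RV (s + 1) \<omega>) (eps (s + 1) \<omega>))) \<in> borel_measurable (F (s + 1))"
    unfolding pricing_kernel_def by measurable
  then show ?thesis by (rule measurable_cong[THEN iffD1, rotated]) (simp add: sdf_numerator_eq)
qed

lemma nn_cond_exp_sdf_numerator:
  assumes t: "t \<ge> 0"
  shows "AE \<omega> in M. nn_cond_exp M (F t) (sdf_numerator t) \<omega> = ennreal (sdf_denominator (\<Theta> t \<omega>))"
proof -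
  interpret sigma_finite_subalgebra M "F t"
    by (rule sigma_finite_subalgebra_prob_space[OF M subalgebra_F])
  have [measurable]: "sdf_numerator t \<in> borel_measurable M"
    using measurable_F_M[OF sdf_numerator_measurable] .
  have denominator: "(\<lambda>\<omega>. ennreal (sdf_denominator (\<Theta> t \<omega>))) \<in> borel_measurable (F t)"
    using Theta_measurable unfolding sdf_denominator_def by measurable
  have "AE \<omega> in M. ennreal (sdf_denominator (\<Theta> t \<omega>)) = nn_cond_exp M (F t) (sdf_numerator t) \<omega>"
  proof (rule nn_cond_exp_charact)
    fix A assume A: "A \<in> sets (F t)"
    have "(\<integral>\<^sup>+\<omega>\<in>A. sdf_numerator t \<omega> \<partial>M)
        = (\<integral>\<^sup>+\<omega>. indicator A \<omega> * ennreal (pricing_kernel (RV (t + 1) \<omega>) (eps (t + 1) \<omega>)) \<partial>M)"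
      by (rule nn_integral_cong) (simp add: sdf_numerator_eq mult.commute)
    also have "\<dots> = (\<integral>\<^sup>+\<omega>. indicator A \<omega> *
        (\<integral>\<^sup>+x. \<integral>\<^sup>+z. ennreal (pricing_kernel x z) \<partial>std_normal \<partial>ncgamma \<delta> (\<Theta> t \<omega>) \<theta>) \<partial>M)"
      using nn_integral_next_step[OF t _ borel_measurable_pricing_kernel, of "indicator A"] A by simp
    also have "\<dots> = (\<integral>\<^sup>+\<omega>\<in>A. ennreal (sdf_denominator (\<Theta> t \<omega>)) \<partial>M)"
      by (rule nn_integral_cong) (simp add: nn_integral_pricing_kernel Theta_nonneg mult.commute)
    finally show "(\<integral>\<^sup>+\<omega>\<in>A. sdf_numerator t \<omega> \<partial>M) = (\<integral>\<^sup>+\<omega>\<in>A. ennreal (sdf_denominator (\<Theta> t \<omega>)) \<partial>M)" .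
  qed (use denominator in simp_all)
  then show ?thesis by (auto elim: AE_mp)
qed

definition density_process :: "int \<Rightarrow> 'a \<Rightarrow> ennreal" where
  "density_process T \<omega> = (\<Prod>s\<in>{0..<T}. sdf M (filt M eps RV) RV y \<nu>1 \<nu>2 s \<omega>)"

lemma density_process_measurable: "density_process T \<in> borel_measurable (F T)"
  unfolding density_process_def[abs_def] sdf_eq
proof (intro borel_measurable_prod_ennreal borel_measurable_divide_ennreal)
  fix s assume "s \<in> {0..<T}"
  then show "sdf_numerator s \<in> borel_measurable (F T)"
    and "nn_cond_exp M (F s) (sdf_numerator s) \<in> borel_measurable (F T)"
    using measurable_F_mono[OF _ sdf_numerator_measurable, of s T]
      measurable_F_mono[OF _ borel_measurable_nn_cond_exp, of s T] by auto
qed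

lemma nn_integral_Q:
  assumes "T \<ge> 0" and "f \<in> borel_measurable (F T)"
  shows "(\<integral>\<^sup>+\<omega>. f \<omega> \<partial>Q) = (\<integral>\<^sup>+\<omega>. density_process T \<omega> * f \<omega> \<partial>M)"
proof (rule nn_integral_density_on_subalgebra[OF subalgebra_F subalgebra_Q_F density_process_measurable])
  fix A assume "A \<in> sets (F T)"
  then show "emeasure Q A = (\<integral>\<^sup>+\<omega>\<in>A. density_process T \<omega> \<partial>M)"
    using Q_density assms(1) unfolding density_process_def by blast
qed (rule assms(2))

lemma measurable_F_eps_star: "u \<le> t \<Longrightarrow> eps_star u \<in> borel_measurable (F t)"
proof -
  assume "u \<le> t"
  note [measurable] = measurable_filt_eps[OF this] measurable_filt_RV[OF this]
  show ?thesis unfolding eps_star_def[abs_def] by measurable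
qed

lemma eps_star_measurable[measurable]: "eps_star u \<in> borel_measurable M"
  using measurable_F_M[OF measurable_F_eps_star[of u u]] by simp

lemma AE_density_process_Suc:
  assumes t: "t \<ge> 0"
  shows "AE \<omega> in M. density_process (t + 1) \<omega> = density_process t \<omega> *
    (ennreal (pricing_kernel (RV (t + 1) \<omega>) (eps (t + 1) \<omega>)) * inverse (ennreal (sdf_denominator (\<Theta> t \<omega>))))"
proof (rule AE_mp[OF nn_cond_exp_sdf_numerator[OF t]], rule AE_I2, rule impI)
  fix \<omega> assume "\<omega> \<in> space M"
    and "nn_cond_exp M (F t) (sdf_numerator t) \<omega> = ennreal (sdf_denominator (\<Theta> t \<omega>))"
  moreover have "{0..<t + 1} = insert t {0..<t}" using t by auto
  ultimately show "density_process (t + 1) \<omega> = density_process t \<omega> *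
      (ennreal (pricing_kernel (RV (t + 1) \<omega>) (eps (t + 1) \<omega>)) * inverse (ennreal (sdf_denominator (\<Theta> t \<omega>))))"
    unfolding density_process_def by (simp add: sdf_eq sdf_numerator_eq divide_ennreal_def mult.commute)
qed

lemma nn_integral_next_step_Q:
  assumes t: "t \<ge> 0" and w[measurable]: "w \<in> borel_measurable (F t)"
    and h[measurable]: "h \<in> borel_measurable (borel \<Otimes>\<^sub>M borel)"
  shows "(\<integral>\<^sup>+\<omega>. w \<omega> * h (RV (t + 1) \<omega>, eps_star (t + 1) \<omega>) \<partial>Q)
       = (\<integral>\<^sup>+\<omega>. w \<omega> * (\<integral>\<^sup>+x. \<integral>\<^sup>+z. h (x, z) \<partial>std_normal \<partial>ncgamma \<delta> (\<kappa> * \<Theta> t \<omega>) (\<kappa> * \<theta>)) \<partial>Q)"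
proof -
  define W where "W \<omega> = density_process t \<omega> * w \<omega> * inverse (ennreal (sdf_denominator (\<Theta> t \<omega>)))" for \<omega>
  define h' where "h' p = ennreal (pricing_kernel (fst p) (snd p)) * h (fst p, snd p + \<nu>2 * sqrt (fst p))" for p
  define g where "g \<omega> = (\<integral>\<^sup>+x. \<integral>\<^sup>+z. h (x, z) \<partial>std_normal \<partial>ncgamma \<delta> (\<kappa> * \<Theta> t \<omega>) (\<kappa> * \<theta>))" for \<omega>
  note [measurable] = measurable_F_mono[OF _ w, of "t + 1"]
    measurable_filt_RV[of "t + 1" "t + 1"] measurable_F_eps_star[of "t + 1" "t + 1"]
  have W: "W \<in> borel_measurable (F t)"
    using density_process_measurable w Theta_measurable unfolding W_def sdf_denominator_def
    by measurable
  have h'[measurable]: "h' \<in> borel_measurable (borel \<Otimes>\<^sub>M borel)"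
    unfolding h'_def pricing_kernel_def by measurable
  have g: "g \<in> borel_measurable (F t)"
    unfolding g_def using \<kappa>_pos borel_measurable_nn_integral_std_normal[OF h]
    by (intro borel_measurable_nn_integral_kernel[OF ncgamma_Theta_prob_algebra])
  have "(\<integral>\<^sup>+\<omega>. w \<omega> * h (RV (t + 1) \<omega>, eps_star (t + 1) \<omega>) \<partial>Q)
      = (\<integral>\<^sup>+\<omega>. density_process (t + 1) \<omega> * (w \<omega> * h (RV (t + 1) \<omega>, eps_star (t + 1) \<omega>)) \<partial>M)"
    using t by (intro nn_integral_Q) simp_all
  also have "\<dots> = (\<integral>\<^sup>+\<omega>. W \<omega> * h' (RV (t + 1) \<omega>, eps (t + 1) \<omega>) \<partial>M)"
  proof (rule nn_integral_cong_AE, rule AE_mp[OF AE_density_process_Suc[OF t]], rule AE_I2, rule impI)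
    fix \<omega> assume "density_process (t + 1) \<omega> = density_process t \<omega> *
        (ennreal (pricing_kernel (RV (t + 1) \<omega>) (eps (t + 1) \<omega>)) * inverse (ennreal (sdf_denominator (\<Theta> t \<omega>))))"
    then show "density_process (t + 1) \<omega> * (w \<omega> * h (RV (t + 1) \<omega>, eps_star (t + 1) \<omega>))
        = W \<omega> * h' (RV (t + 1) \<omega>, eps (t + 1) \<omega>)"
      unfolding W_def h'_def eps_star_def by (simp add: mult_ac)
  qed
  also have "\<dots> = (\<integral>\<^sup>+\<omega>. W \<omega> * (\<integral>\<^sup>+x. \<integral>\<^sup>+z. h' (x, z) \<partial>std_normal \<partial>ncgamma \<delta> (\<Theta> t \<omega>) \<theta>) \<partial>M)"
    by (rule nn_integral_next_step[OF t W h'])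
  also have "\<dots> = (\<integral>\<^sup>+\<omega>. density_process t \<omega> * (w \<omega> * g \<omega>) \<partial>M)"
  proof (rule nn_integral_cong)
    fix \<omega> assume "\<omega> \<in> space M"
    then have "(\<integral>\<^sup>+x. \<integral>\<^sup>+z. h' (x, z) \<partial>std_normal \<partial>ncgamma \<delta> (\<Theta> t \<omega>) \<theta>)
        = ennreal (sdf_denominator (\<Theta> t \<omega>)) * g \<omega>"
      unfolding h'_def g_def by (simp add: nn_integral_pricing_kernel_tilt Theta_nonneg)
    moreover have "inverse (ennreal (sdf_denominator (\<Theta> t \<omega>))) * ennreal (sdf_denominator (\<Theta> t \<omega>)) = 1"
      using sdf_denominator_pos[of "\<Theta> t \<omega>"] by (simp add: inverse_ennreal ennreal_mult[symmetric])
    ultimately show "W \<omega> * (\<integral>\<^sup>+x. \<integral>\<^sup>+z. h' (x, z) \<partial>std_normal \<partial>ncgamma \<delta> (\<Theta> t \<omega>) \<theta>)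
        = density_process t \<omega> * (w \<omega> * g \<omega>)"
      unfolding W_def by (simp add: mult_ac)
  qed
  also have "\<dots> = (\<integral>\<^sup>+\<omega>. w \<omega> * g \<omega> \<partial>Q)"
    using t g by (intro nn_integral_Q[symmetric]) simp_all
  finally show ?thesis unfolding g_def .
qed

lemma emeasure_Q_next_step:
  assumes t: "t \<ge> 0" and A: "A \<in> sets (F t)" and [measurable]: "C \<in> sets borel" "B \<in> sets borel"
  shows "emeasure Q (A \<inter> RV (t + 1) -` C \<inter> eps_star (t + 1) -` B)
       = emeasure std_normal B * (\<integral>\<^sup>+\<omega>\<in>A. emeasure (ncgamma \<delta> (\<kappa> * \<Theta> t \<omega>) (\<kappa> * \<theta>)) C \<partial>Q)"
proof -
  define h where "h p = (indicator C (fst p) * indicator B (snd p) :: ennreal)" for p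
  have [measurable]: "h \<in> borel_measurable (borel \<Otimes>\<^sub>M borel)" unfolding h_def by measurable
  have A_M[measurable]: "A \<in> sets M" using A subalgebra_F by (auto simp: subalgebra_def)
  have [measurable]: "(\<lambda>\<omega>. emeasure (ncgamma \<delta> (\<kappa> * \<Theta> t \<omega>) (\<kappa> * \<theta>)) C) \<in> borel_measurable M"
    using measurable_F_M[OF measurable_emeasure_kernel[OF
          measurable_prob_algebraD[OF ncgamma_Theta_prob_algebra[OF \<kappa>_pos]]]] by simp
  have "(\<integral>\<^sup>+z. h (x, z) \<partial>std_normal) = indicator C x * emeasure std_normal B" for x
    unfolding h_def by (simp add: nn_integral_cmult)
  then have inner: "(\<integral>\<^sup>+x. \<integral>\<^sup>+z. h (x, z) \<partial>std_normal \<partial>K) = emeasure std_normal B * emeasure K C"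
    if "sets K = sets borel" for K
    using that nn_integral_cmult_indicator[of C K "emeasure std_normal B"] by (simp add: mult.commute)
  have "A \<subseteq> space M" using A_M by (rule sets.sets_into_space)
  then have "A \<inter> RV (t + 1) -` C \<inter> eps_star (t + 1) -` B
      = A \<inter> {\<omega>\<in>space M. RV (t + 1) \<omega> \<in> C \<and> eps_star (t + 1) \<omega> \<in> B}" by auto
  then have "A \<inter> RV (t + 1) -` C \<inter> eps_star (t + 1) -` B \<in> sets M" by simp
  then have "emeasure Q (A \<inter> RV (t + 1) -` C \<inter> eps_star (t + 1) -` B)
      = (\<integral>\<^sup>+\<omega>. indicator A \<omega> * h (RV (t + 1) \<omega>, eps_star (t + 1) \<omega>) \<partial>Q)"
    by (simp add: nn_integral_indicator[symmetric] sets_Q del: nn_integral_indicator)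
       (auto intro!: nn_integral_cong simp: h_def indicator_def)
  also have "\<dots> = (\<integral>\<^sup>+\<omega>. indicator A \<omega> * (emeasure std_normal B *
      emeasure (ncgamma \<delta> (\<kappa> * \<Theta> t \<omega>) (\<kappa> * \<theta>)) C) \<partial>Q)"
    using A by (simp add: nn_integral_next_step_Q[OF t] inner)
  also have "\<dots> = (\<integral>\<^sup>+\<omega>. emeasure std_normal B *
      (emeasure (ncgamma \<delta> (\<kappa> * \<Theta> t \<omega>) (\<kappa> * \<theta>)) C * indicator A \<omega>) \<partial>Q)"
    by (intro nn_integral_cong) (simp only: mult_ac)
  also have "\<dots> = emeasure std_normal B * (\<integral>\<^sup>+\<omega>\<in>A. emeasure (ncgamma \<delta> (\<kappa> * \<Theta> t \<omega>) (\<kappa> * \<theta>)) C \<partial>Q)"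
    by (rule nn_integral_cmult) (simp add: measurable_Q_iff)
  finally show ?thesis .
qed

lemma eps_star_indep_past:
  assumes t: "t \<ge> 0" and A: "A \<in> sets (F t)" and B: "B \<in> sets borel"
  shows "emeasure Q (A \<inter> eps_star (t + 1) -` B) = emeasure Q A * emeasure std_normal B"
proof -
  have "(\<integral>\<^sup>+\<omega>\<in>A. emeasure (ncgamma \<delta> (\<kappa> * \<Theta> t \<omega>) (\<kappa> * \<theta>)) UNIV \<partial>Q) = (\<integral>\<^sup>+\<omega>. indicator A \<omega> \<partial>Q)"
    using \<kappa>_pos \<delta>_pos \<theta>_pos Theta_nonneg
    by (intro nn_integral_cong) (simp add: prob_space.emeasure_space_1[OF prob_space_ncgamma, simplified])
  also have "\<dots> = emeasure Q A" using A subalgebra_Q_F by (simp add: subalgebra_def subset_eq)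
  finally show ?thesis
    using emeasure_Q_next_step[OF t A _ B, of UNIV] by (simp add: mult.commute)
qed

lemma eps_star_distributed:
  assumes "t \<ge> 1"
  shows "distributed Q lborel (eps_star t) (\<lambda>x. ennreal (std_normal_density x))"
  unfolding distributed_def
proof (intro conjI)
  show "distr Q lborel (eps_star t) = std_normal"
  proof (rule measure_eqI)
    fix B assume "B \<in> sets (distr Q lborel (eps_star t))"
    then have B: "B \<in> sets borel" by simp
    have "space M \<in> sets (F (t - 1))" using sets.top[of "F (t - 1)"] by simp
    then show "emeasure (distr Q lborel (eps_star t)) B = emeasure std_normal B"
      using eps_star_indep_past[of "t - 1" "space M" B] assms B
        prob_space.emeasure_space_1[OF Q]
      by (simp add: emeasure_distr measurable_Q_iff Int_commute)
  qed simp
qed (simp_all add: measurable_Q_iff)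

lemma eps_star_indep_vars: "prob_space.indep_vars Q (\<lambda>_. borel) eps_star {1..}"
  using Q subalgebra_Q_F measurable_F_eps_star eps_star_indep_past
  by (rule indep_vars_if_indep_of_past)

lemma RV_indep_eps_star:
  assumes t: "t \<ge> 0"
  shows "prob_space.indep_set Q
      (sets (sigma (space Q) (sets (F t) \<union> {RV (t + 1) -` C \<inter> space Q | C. C \<in> sets borel})))
      {eps_star (t + 1) -` B \<inter> space Q | B. B \<in> sets borel}"
proof (rule indep_set_sigma_vimage_Un[OF Q subalgebra_Q_F])
  fix A and C B :: "real set"
  assume A: "A \<in> sets (F t)" and C: "C \<in> sets borel" and B: "B \<in> sets borel"
  have "space M \<in> sets (F t)" using sets.top[of "F t"] by simp
  then have "emeasure Q (eps_star (t + 1) -` B \<inter> space Q) = emeasure std_normal B"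
    using eps_star_indep_past[OF t _ B] prob_space.emeasure_space_1[OF Q] by (simp add: Int_commute)
  moreover have "emeasure Q (A \<inter> RV (t + 1) -` C)
      = (\<integral>\<^sup>+\<omega>\<in>A. emeasure (ncgamma \<delta> (\<kappa> * \<Theta> t \<omega>) (\<kappa> * \<theta>)) C \<partial>Q)"
    using emeasure_Q_next_step[OF t A C, of UNIV] prob_space.emeasure_space_1[OF prob_space_std_normal]
    by simp
  ultimately show "emeasure Q (A \<inter> RV (t + 1) -` C \<inter> eps_star (t + 1) -` B)
      = emeasure Q (A \<inter> RV (t + 1) -` C) * emeasure Q (eps_star (t + 1) -` B \<inter> space Q)"
    using emeasure_Q_next_step[OF t A C B] by (simp add: mult.commute)
qed (simp_all add: measurable_Q_iff)

lemma Theta_star: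
  "lharg_Theta (\<kappa> * d) (\<lambda>i. \<kappa> * \<beta> i) (\<lambda>j. \<kappa> * \<alpha> j) (\<gamma> + lam + 1/2) p q RV eps_star t \<omega> = \<kappa> * \<Theta> t \<omega>"
proof -
  have "eps_star u \<omega> - (\<gamma> + lam + 1/2) * sqrt (RV u \<omega>) = eps u \<omega> - \<gamma> * sqrt (RV u \<omega>)" for u
    unfolding eps_star_def using no_arbitrage by (simp add: algebra_simps)
  then show ?thesis unfolding lharg_Theta_def by (simp add: sum_distrib_left algebra_simps)
qed

lemma RV_cond_law_Q:
  assumes t: "t \<ge> 0"
  shows "has_cond_law Q (F t) (RV (t + 1)) (\<lambda>\<omega>. ncgamma \<delta> (\<kappa> * \<Theta> t \<omega>) (\<kappa> * \<theta>))"
proof -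
  have RV_Q: "RV (t + 1) \<in> borel_measurable Q" by (simp add: measurable_Q_iff)
  show ?thesis
    unfolding has_cond_law_iff[OF Q subalgebra_Q_F RV_Q ncgamma_Theta_prob_algebra[OF \<kappa>_pos]]
    using emeasure_Q_next_step[OF t _ _ sets.top] prob_space.emeasure_space_1[OF prob_space_std_normal]
    by simp
qed

lemma lharg_Q:
  "lharg Q (filt M eps RV) eps_star RV y r (- 1/2) \<delta> (\<kappa> * \<theta>) (\<kappa> * d) (\<gamma> + lam + 1/2) p q
     (\<lambda>i. \<kappa> * \<beta> i) (\<lambda>j. \<kappa> * \<alpha> j)"
  unfolding lharg_def Theta_star
proof (intro conjI allI impI ballI)
  fix t \<omega> assume \<omega>: "\<omega> \<in> space Q"
  then have "sqrt (RV (t + 1) \<omega>) * sqrt (RV (t + 1) \<omega>) = RV (t + 1) \<omega>"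
    using RV_pos[of \<omega> "t + 1"] by simp
  then show "y (t + 1) \<omega> = r + - 1 / 2 * RV (t + 1) \<omega> + sqrt (RV (t + 1) \<omega>) * eps_star (t + 1) \<omega>"
    using y_eq[of \<omega> t] \<omega> no_arbitrage unfolding eps_star_def by (simp add: algebra_simps)
qed (simp_all add: RV_pos measurable_Q_iff eps_star_distributed eps_star_indep_vars
    RV_indep_eps_star[simplified] RV_cond_law_Q)

end

theorem proposition3:
  fixes M Q :: "'a measure"
    and eps RV y :: "int \<Rightarrow> 'a \<Rightarrow> real"
    and r lam \<delta> \<theta> d \<gamma> \<nu>1 \<nu>2 :: real
    and p q :: nat
    and \<beta> \<alpha> :: "nat \<Rightarrow> real"
  assumes P: "prob_space M"
    and params: "\<delta> > 0" "\<theta> > 0" "d \<ge> 0" "p \<ge> 1" "q \<ge> 1"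
      "\<forall>i\<in>{1..p}. \<beta> i \<ge> 0" "\<forall>j\<in>{1..q}. \<alpha> j \<ge> 0"
    and model: "lharg M (filt M eps RV) eps RV y r lam \<delta> \<theta> d \<gamma> p q \<beta> \<alpha>"
    and Qprob: "prob_space Q" and Qsets: "sets Q = sets M"
    and Qdef: "\<forall>T\<ge>0. \<forall>A\<in>sets (filt M eps RV T).
                 emeasure Q A = (\<integral>\<^sup>+ \<omega>\<in>A. (\<Prod>s\<in>{0..<T}. sdf M (filt M eps RV) RV y \<nu>1 \<nu>2 s \<omega>) \<partial>M)"
    and no_arb: "\<nu>2 = lam + 1/2"
    and pos: "1 - \<theta> * (- lam\<^sup>2 / 2 - \<nu>1 + 1/8) > 0"
  shows "let \<kappa> = 1 / (1 - \<theta> * (- lam\<^sup>2 / 2 - \<nu>1 + 1/8)) in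
         \<exists>eps'. lharg Q (filt M eps RV) eps' RV y r (- 1/2) \<delta> (\<kappa> * \<theta>) (\<kappa> * d) (\<gamma> + lam + 1/2) p q
                   (\<lambda>i. \<kappa> * \<beta> i) (\<lambda>j. \<kappa> * \<alpha> j)"
proof -
  interpret lharg_risk_neutral M Q eps RV y r lam \<delta> \<theta> d \<gamma> \<nu>1 \<nu>2 p q \<beta> \<alpha>
    by (rule lharg_risk_neutral.intro) (use P params model Qprob Qsets Qdef no_arb pos in auto)
  show ?thesis
    using lharg_Q unfolding Let_def \<kappa>_def Y_star_def by blast
qed

end
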